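(* Let $G$ be a simple connected graph with $n$ vertices and $m$ edges, let $k\ge1$ be an integer, and let $S_{2k}(G)$ be the $2k$-parallel subdivision graph of $G$. Then the eigenvalues of the normalized Laplacian $\mathscr{L}(S_{2k}(G))$ are as follows. (i) If $\lambda\notin\{0,2\}$ is an eigenvalue of $\mathscr{L}(G)$ and $\mu_1,\mu_2,\mu_3$ are the roots of $4\mu^3-12\mu^2+9\mu-\lambda=0$, then $\mu_1,\mu_2,\mu_3$ are eigenvalues of $\mathscr{L}(S_{2k}(G))$, each with the same multiplicity as $\lambda$ has in $\mathscr{L}(G)$. (ii) $0$ is an eigenvalue of $\mathscr{L}(S_{2k}(G))$ with multiplicity $1$; if $G$ is bipartite, $2$ is an eigenvalue of $\mathscr{L}(S_{2k}(G))$ with multiplicity $1$. (iii) If $G$ is non-bipartite, then $\frac12$ and $\frac32$ are eigenvalues of $\mathscr{L}(S_{2k}(G))$ with multiplicities $km-n$ and $km-n+2$ respectively. (iv) If $G$ is bipartite, then $\frac12$ and $\frac32$ are eigenvalues of $\mathscr{L}(S_{2k}(G))$, both with multiplicity $km-n+2$.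
   Context: For a graph $H$ with adjacency matrix $A(H)$ and diagonal degree matrix $D(H)$ (no isolated vertices), the normalized Laplacian is $\mathscr{L}(H)=I-D(H)^{-1/2}A(H)D(H)^{-1/2}$. The $2k$-parallel subdivision graph $S_{2k}(G)$ is obtained from $G$ by replacing each edge $uv$ of $G$ by $k$ internally disjoint paths $u-w_1-w_2-v$ of length $3$ (each with its own two new internal vertices); thus $S_{2k}(G)$ has $n+2km$ vertices and $3km$ edges, each vertex $u\in V(G)$ has degree $k\,d_G(u)$ and each new vertex has degree $2$. *)

theory Defs
  imports "Jordan_Normal_Form.Char_Poly"
begin

definition simple_graph :: "'a set \<Rightarrow> ('a \<Rightarrow> 'a \<Rightarrow> bool) \<Rightarrow> bool" where
  "simple_graph V E \<longleftrightarrow> finite V \<and> (\<forall>u v. E u v \<longrightarrow> u \<in> V \<and> v \<in> V \<and> u \<noteq> v \<and> E v u)"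

definition connected_graph :: "'a set \<Rightarrow> ('a \<Rightarrow> 'a \<Rightarrow> bool) \<Rightarrow> bool" where
  "connected_graph V E \<longleftrightarrow> (\<forall>u\<in>V. \<forall>v\<in>V. E\<^sup>*\<^sup>* u v)"

definition bipartite :: "'a set \<Rightarrow> ('a \<Rightarrow> 'a \<Rightarrow> bool) \<Rightarrow> bool" where
  "bipartite V E \<longleftrightarrow> (\<exists>A \<subseteq> V. \<forall>u v. E u v \<longrightarrow> (u \<in> A \<longleftrightarrow> v \<notin> A))"

definition edge_set :: "('a \<Rightarrow> 'a \<Rightarrow> bool) \<Rightarrow> 'a set set" where
  "edge_set E = {{u, v} | u v. E u v}"

definition num_edges :: "('a \<Rightarrow> 'a \<Rightarrow> bool) \<Rightarrow> nat" where
  "num_edges E = card (edge_set E)"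

definition deg :: "'a set \<Rightarrow> ('a \<Rightarrow> 'a \<Rightarrow> bool) \<Rightarrow> 'a \<Rightarrow> nat" where
  "deg V E x = card {y \<in> V. E x y}"

definition nlap_mat :: "'a list \<Rightarrow> 'a set \<Rightarrow> ('a \<Rightarrow> 'a \<Rightarrow> bool) \<Rightarrow> real mat" where
  "nlap_mat vs V E = mat (length vs) (length vs)
     (\<lambda>(i, j). (if i = j then 1 else 0)
        - (if E (vs ! i) (vs ! j) then 1 / sqrt (real (deg V E (vs ! i)) * real (deg V E (vs ! j))) else 0))"

definition vertex_list :: "'a set \<Rightarrow> 'a list" where
  "vertex_list V = (SOME vs. distinct vs \<and> set vs = V)"

definition nlap :: "'a set \<Rightarrow> ('a \<Rightarrow> 'a \<Rightarrow> bool) \<Rightarrow> real mat" where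
  "nlap V E = nlap_mat (vertex_list V) V E"

text \<open>Multiplicity of mu as an eigenvalue of the normalized Laplacian:
  its multiplicity as a root of the characteristic polynomial (0 if not an eigenvalue).\<close>

definition nlap_mult :: "'a set \<Rightarrow> ('a \<Rightarrow> 'a \<Rightarrow> bool) \<Rightarrow> real \<Rightarrow> nat" where
  "nlap_mult V E \<mu> = order \<mu> (char_poly (nlap V E))"

text \<open>The 2k-parallel subdivision graph. For an edge uv of G and i < k, the i-th path
  replacing uv is  u - Mid u v i - Mid v u i - v.\<close>

datatype 'a sub_vertex = Orig 'a | Mid 'a 'a nat

definition sub_vertices :: "nat \<Rightarrow> 'a set \<Rightarrow> ('a \<Rightarrow> 'a \<Rightarrow> bool) \<Rightarrow> 'a sub_vertex set" where
  "sub_vertices k V E = Orig ` V \<union> {Mid u v i | u v i. E u v \<and> i < k}"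

fun sub_edge :: "nat \<Rightarrow> ('a \<Rightarrow> 'a \<Rightarrow> bool) \<Rightarrow> 'a sub_vertex \<Rightarrow> 'a sub_vertex \<Rightarrow> bool" where
  "sub_edge k E (Orig u) (Mid u' v i) \<longleftrightarrow> u = u' \<and> E u v \<and> i < k"
| "sub_edge k E (Mid u' v i) (Orig u) \<longleftrightarrow> u = u' \<and> E u v \<and> i < k"
| "sub_edge k E (Mid u v i) (Mid v' u' i') \<longleftrightarrow> u = u' \<and> v = v' \<and> i = i' \<and> E u v \<and> i < k"
| "sub_edge k E (Orig u) (Orig v) \<longleftrightarrow> False"

end

theory Submission
  imports Defs "Jordan_Normal_Form.Schur_Decomposition"
begin

text \<open>
  List the vertices of the subdivision as the original ones followed by the internal ones. With
  t = x - 1, the matrix x I - L(S) then has the block form [[t I, B], [C, t I + P/2]], where P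
  exchanges the two internal vertices of a path, so the lower right block has determinant
  (t^2 - 1/4)^(k m). The Schur complement t I - B (t I + P/2)^(-1) C is a multiple of
  F(x) I - L(G) with F(x) = 4 x^3 - 12 x^2 + 9 x, which yields
    4^(k m) chi_S(x) D(x)^n = D(x)^(k m) chi_G(F(x)),   D(x) = (2 x - 1) (2 x - 3).
  Comparing root multiplicities at x, and using that F - F(x) has a simple root at x except for
  the double roots at 1/2 and 3/2, gives
    mult_S(x) + n [x \<in> {1/2, 3/2}] = k m [x \<in> {1/2, 3/2}] + mult_G(F(x)) (1 + [x \<in> {1/2, 3/2}]).
  The remaining input is the multiplicity of 0 and 2 for L(G): an eigenvector for 1 - s with
  s = 1 or s = -1 is D^(1/2) f with f v = s f u along every edge, so for connected G the
  eigenspace of 0 is a line, that of 2 is a line if G is bipartite and trivial otherwise; as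
  L(G) is symmetric, a one-dimensional eigenspace means a simple root of chi_G.
\<close>

section \<open>Polynomials\<close>

lemma pcompose_power_left: "pcompose (p ^ r) q = pcompose p q ^ r"
  for p q :: "'a::comm_semiring_1 poly"
  by (induction r) (simp_all add: pcompose_mult)

lemma order_power:
  fixes p :: "'a::idom poly"
  assumes "p \<noteq> 0"
  shows "Polynomial.order a (p ^ r) = r * Polynomial.order a p"
  using assms by (induction r) (simp_all add: order_mult order_0I)

lemma order_pcompose:
  fixes p q :: "'a::idom poly"
  assumes p: "p \<noteq> 0" and q: "degree q \<noteq> 0"
  shows "Polynomial.order a (pcompose p q) = Polynomial.order (poly q a) p * Polynomial.order a (q - [:poly q a:])"
proof -
  define b where "b = poly q a"
  define r where "r = Polynomial.order b p"
  obtain p' where p_eq: "p = [:-b, 1:] ^ r * p'" and p': "\<not> [:-b, 1:] dvd p'"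
    using order_decomp[OF p, of b] unfolding r_def by blast
  have linear: "pcompose [:-b, 1:] q = q - [:b:]"
    by (simp add: pcompose_pCons)
  have split: "pcompose p q = (q - [:b:]) ^ r * pcompose p' q"
    by (simp only: p_eq pcompose_mult pcompose_power_left linear)
  have nonconst: "q - [:b:] \<noteq> 0"
    using q by (metis degree_pCons_0 eq_iff_diff_eq_0)
  have no_root: "poly (pcompose p' q) a \<noteq> 0"
    using p' by (simp add: poly_pcompose b_def dvd_iff_poly_eq_0)
  then have "(q - [:b:]) ^ r * pcompose p' q \<noteq> 0"
    using nonconst by auto
  then show ?thesis
    unfolding split b_def[symmetric] r_def[symmetric]
    using nonconst no_root by (simp add: order_mult order_power order_0I)
qed

lemma poly_eq_cofinite:
  fixes p q :: "'a::{idom, ring_char_0} poly"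
  assumes "finite A" and "\<And>x. x \<notin> A \<Longrightarrow> poly p x = poly q x"
  shows "p = q"
proof (rule ccontr)
  assume "p \<noteq> q"
  then have "finite {x. poly (p - q) x = 0}"
    by (intro poly_roots_finite) simp
  moreover have "UNIV - A \<subseteq> {x. poly (p - q) x = 0}"
    using assms(2) by auto
  ultimately have "finite (UNIV - A)"
    by (rule finite_subset[rotated])
  then show False
    using assms(1) infinite_UNIV_char_0 by (metis Diff_infinite_finite)
qed

definition subdiv_cubic :: "real poly" where
  "subdiv_cubic = [:0, 9, -12, 4:]"

definition subdiv_quadratic :: "real poly" where
  "subdiv_quadratic = [:3, -8, 4:]"

lemma poly_subdiv_cubic: "poly subdiv_cubic x = 4 * x^3 - 12 * x^2 + 9 * x"
  by (simp add: subdiv_cubic_def algebra_simps power2_eq_square power3_eq_cube)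

lemma poly_subdiv_quadratic: "poly subdiv_quadratic x = (2 * x - 1) * (2 * x - 3)"
  by (simp add: subdiv_quadratic_def algebra_simps)

lemma degree_subdiv_cubic: "degree subdiv_cubic = 3"
  by (simp add: subdiv_cubic_def)

lemma subdiv_quadratic_nonzero: "subdiv_quadratic \<noteq> 0"
  by (simp add: subdiv_quadratic_def)

lemma pderiv_subdiv_cubic: "pderiv subdiv_cubic = Polynomial.smult 3 subdiv_quadratic"
  by (simp add: subdiv_cubic_def subdiv_quadratic_def pderiv_pCons)

lemma order_subdiv_quadratic:
  "Polynomial.order x subdiv_quadratic = (if x = 1/2 \<or> x = 3/2 then 1 else 0)"
proof (cases "x = 1/2 \<or> x = 3/2")
  case True
  have "pderiv subdiv_quadratic = [:-8, 8:]"
    by (simp add: subdiv_quadratic_def pderiv_pCons)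
  then have "poly (pderiv subdiv_quadratic) x \<noteq> 0"
    using True by auto
  moreover have "poly subdiv_quadratic x = 0"
    using True by (auto simp: poly_subdiv_quadratic)
  ultimately show ?thesis
    using True order_pderiv[OF subdiv_quadratic_nonzero] by (simp add: order_0I)
next
  case False
  then show ?thesis by (auto simp: poly_subdiv_quadratic order_0I)
qed

lemma order_subdiv_cubic_level:
  "Polynomial.order x (subdiv_cubic - [:poly subdiv_cubic x:]) = Suc (Polynomial.order x subdiv_quadratic)"
proof -
  have "subdiv_cubic - [:poly subdiv_cubic x:] \<noteq> 0"
    using degree_subdiv_cubic by (metis degree_pCons_0 eq_iff_diff_eq_0 zero_neq_numeral)
  moreover have "pderiv (subdiv_cubic - [:poly subdiv_cubic x:]) = Polynomial.smult 3 subdiv_quadratic"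
    by (simp add: pderiv_diff pderiv_subdiv_cubic pderiv_pCons)
  ultimately show ?thesis
    by (simp add: order_pderiv order_smult)
qed

lemma subdiv_cubic_values:
  "poly subdiv_cubic 0 = 0" "poly subdiv_cubic 2 = 2"
  "poly subdiv_cubic (1/2) = 2" "poly subdiv_cubic (3/2) = 0"
  by (simp_all add: poly_subdiv_cubic power2_eq_square power3_eq_cube)

section \<open>Characteristic polynomials\<close>

lemma char_poly_nonzero: "A \<in> carrier_mat n n \<Longrightarrow> char_poly A \<noteq> 0"
  using degree_monic_char_poly[of A n] by auto

lemma sum_indicator_mult:
  fixes f :: "nat \<Rightarrow> 'a::semiring_1"
  assumes "a < n"
  shows "(\<Sum>l = 0..<n. (if l = a then 1 else 0) * f l) = f a"
proof -
  have "(\<Sum>l = 0..<n. (if l = a then 1 else 0) * f l) = (\<Sum>l = 0..<n. if l = a then f l else 0)"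
    by (rule sum.cong) auto
  then show ?thesis
    using assms by simp
qed

lemma char_poly_permute_indices:
  fixes A B :: "'a::field mat"
  assumes A: "A \<in> carrier_mat n n" and B: "B \<in> carrier_mat n n"
    and p: "\<And>i. i < n \<Longrightarrow> p i < n" and p_inj: "inj_on p {..<n}"
    and entries: "\<And>i j. i < n \<Longrightarrow> j < n \<Longrightarrow> B $$ (i, j) = A $$ (p i, p j)"
  shows "char_poly B = char_poly A"
proof -
  define P where "P = mat n n (\<lambda>(i, j). if j = p i then 1 else (0::'a))"
  define Q where "Q = mat n n (\<lambda>(i, j). if i = p j then 1 else (0::'a))"
  have P: "P \<in> carrier_mat n n" and Q: "Q \<in> carrier_mat n n"
    by (auto simp: P_def Q_def)
  have select: "(\<Sum>l = 0..<n. (if l = p i then 1 else 0) * f l) = f (p i)"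
    if "i < n" for i and f :: "nat \<Rightarrow> 'a"
    by (rule sum_indicator_mult[OF p[OF that]])
  have PQ: "P * Q = 1\<^sub>m n"
  proof (rule eq_matI)
    fix i j assume "i < dim_row (1\<^sub>m n :: 'a mat)" "j < dim_col (1\<^sub>m n :: 'a mat)"
    then have ij: "i < n" "j < n" by auto
    have "(P * Q) $$ (i, j) = (\<Sum>l = 0..<n. (if l = p i then 1 else 0) * (if l = p j then 1 else 0))"
      using ij by (simp add: P_def Q_def scalar_prod_def)
    also have "\<dots> = (if p i = p j then 1 else 0)"
      using select[OF ij(1)] .
    finally show "(P * Q) $$ (i, j) = 1\<^sub>m n $$ (i, j)"
      using ij p_inj by (auto dest: inj_onD)
  qed (auto simp: P_def Q_def)
  have QP: "Q * P = 1\<^sub>m n"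
    using mat_mult_left_right_inverse[OF P Q PQ] .
  have "B = P * A * Q"
  proof (rule eq_matI)
    fix i j assume "i < dim_row (P * A * Q)" "j < dim_col (P * A * Q)"
    then have ij: "i < n" "j < n" using P Q by auto
    have PA: "(P * A) $$ (i, l) = A $$ (p i, l)" if "l < n" for l
      using ij that A select[OF ij(1), of "\<lambda>m. A $$ (m, l)"] by (simp add: P_def scalar_prod_def)
    have "(P * A * Q) $$ (i, j) = (\<Sum>l = 0..<n. (P * A) $$ (i, l) * Q $$ (l, j))"
      using ij A P Q by (simp add: scalar_prod_def del: assoc_mult_mat)
    also have "\<dots> = (\<Sum>l = 0..<n. (if l = p j then 1 else 0) * A $$ (p i, l))"
      using ij by (intro sum.cong) (auto simp: Q_def PA)
    also have "\<dots> = A $$ (p i, p j)"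
      using select[OF ij(2)] .
    finally show "B $$ (i, j) = (P * A * Q) $$ (i, j)"
      using entries ij by simp
  qed (use A B P Q in auto)
  then have "similar_mat B A"
    unfolding similar_mat_def using similar_mat_witI[OF PQ QP _ B A P Q] by blast
  then show ?thesis
    by (rule char_poly_similar)
qed

lemma det_four_block_mat_schur:
  fixes A B C D X :: "'a::idom mat"
  assumes A: "A \<in> carrier_mat n n" and B: "B \<in> carrier_mat n m"
    and C: "C \<in> carrier_mat m n" and D: "D \<in> carrier_mat m m"
    and X: "X \<in> carrier_mat m n" and DX: "D * X = C"
  shows "det (four_block_mat A B C D) = det D * det (A - B * X)"
proof -
  define M where "M = four_block_mat A B C D"
  define N where "N = four_block_mat (1\<^sub>m n) (0\<^sub>m n m) (- X) (1\<^sub>m m)"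
  have M: "M \<in> carrier_mat (n + m) (n + m)" and N: "N \<in> carrier_mat (n + m) (n + m)"
    using A D by (auto simp: M_def N_def)
  have "A * 1\<^sub>m n + B * - X = A - B * X"
    using A B X by (simp add: minus_add_uminus_mat[of A n n "B * X"])
  moreover have "C * 1\<^sub>m n + D * - X = 0\<^sub>m m n"
    using C D X DX by (auto intro!: eq_matI)
  ultimately have MN: "M * N = four_block_mat (A - B * X) B (0\<^sub>m m n) D"
    unfolding M_def N_def using A B C D X
    by (subst mult_four_block_mat[OF A B C D one_carrier_mat zero_carrier_mat _ one_carrier_mat]) auto
  have "det N = 1"
    unfolding N_def by (subst det_four_block_mat_upper_right_zero[of _ n _ m]) (use X in auto)
  then have "det M = det (M * N)"
    using det_mult[OF M N] by simp
  also have "\<dots> = det (A - B * X) * det D"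
    unfolding MN by (rule det_four_block_mat_lower_left_zero) (use A B D X in auto)
  finally show ?thesis
    by (simp add: M_def mult.commute)
qed

lemma conjugate_real_vec [simp]: "conjugate (v :: real vec) = v"
  by (auto simp: conjugate_vec_def)

lemma scalar_prod_self_eq_0_real:
  fixes v :: "real vec"
  assumes "v \<in> carrier_vec n"
  shows "v \<bullet> v = 0 \<longleftrightarrow> v = 0\<^sub>v n"
  using conjugate_square_eq_0_vec[OF assms] by simp

lemma eigenvector_orthogonal_basis:
  fixes A :: "real mat"
  assumes A: "A \<in> carrier_mat n n" and ev: "eigenvector A v lam"
  obtains W W' where "W \<in> carrier_mat n n" "W' \<in> carrier_mat n n"
    and "W' * W = 1\<^sub>m n" "W * W' = 1\<^sub>m n"
    and "row W' 0 = (1 / (v \<bullet> v)) \<cdot>\<^sub>v v"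
    and "col (W' * A * W) 0 = vec n (\<lambda>i. if i = 0 then lam else 0)"
proof -
  have v: "v \<in> carrier_vec n" and v0: "v \<noteq> 0\<^sub>v n" and Av: "A *\<^sub>v v = lam \<cdot>\<^sub>v v"
    using ev A by (auto simp: eigenvector_def)
  have n: "n \<noteq> 0" using v v0 by auto
  interpret cof_vec_space n "TYPE(real)" .
  define b where "b = basis_completion v"
  define ws where "ws = gram_schmidt n b"
  define W where "W = mat_of_cols n ws"
  define W' where "W' = corthogonal_inv W"
  from basis_completion[OF v v0, folded b_def]
  have b: "set b \<subseteq> carrier_vec n" "distinct b" "\<not> lin_dep (set b)" "hd b = v" "length b = n"
    by auto
  then obtain vs where b_eq: "b = v # vs" using n by (cases b) auto
  have ws: "set ws \<subseteq> carrier_vec n" "corthogonal ws" "length ws = n"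
    using gram_schmidt_result[OF b(1-3) refl, folded ws_def] b(5) by auto
  have hd_ws: "hd ws = v"
    using gram_schmidt_hd[OF v, of vs, folded b_eq] unfolding ws_def .
  have W: "W \<in> carrier_mat n n"
    using ws mat_of_cols_carrier(1)[of n ws] by (simp add: W_def)
  have W': "W' \<in> carrier_mat n n"
    using W by (simp add: W'_def corthogonal_inv_def mat_of_rows_def)
  have "W' * W = 1\<^sub>m n" "W * W' = 1\<^sub>m n"
    using corthogonal_inv_result[OF orthogonal_mat_of_cols[OF ws(1-2)]] W W'
      mat_mult_left_right_inverse[OF W' W]
    by (auto simp: W'_def W_def inverts_mat_def)
  moreover have "col (W' * A * W) 0 = vec n (\<lambda>i. if i = 0 then lam else 0)"
    unfolding W'_def W_def using corthogonal_col_ev_0[OF A v v0 Av n hd_ws ws] .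
  moreover have "row W' 0 = (1 / (v \<bullet> v)) \<cdot>\<^sub>v v"
  proof -
    have "ws ! 0 = v"
      using hd_ws ws(3) n by (cases ws) auto
    moreover have "row W' 0 = row (mat_of_rows n (map vec_inv ws)) 0"
      using ws by (simp add: W'_def W_def corthogonal_inv_def)
    ultimately have "row W' 0 = vec_inv v"
      using ws n v by (subst (asm) mat_of_rows_row) auto
    then show ?thesis
      by (simp add: vec_inv_def)
  qed
  ultimately show thesis
    using that W W' by blast
qed

text \<open>By symmetry, row 0 of W' A W is lam times row 0 of W' W = 1.\<close>

lemma symmetric_row0_vanishes:
  fixes A W W' :: "real mat"
  assumes A: "A \<in> carrier_mat n n" and sym: "transpose_mat A = A"
    and W: "W \<in> carrier_mat n n" and W': "W' \<in> carrier_mat n n" and W'W: "W' * W = 1\<^sub>m n"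
    and row_W': "row W' 0 = (1 / (v \<bullet> v)) \<cdot>\<^sub>v v"
    and v: "v \<in> carrier_vec n" and Av: "A *\<^sub>v v = lam \<cdot>\<^sub>v v"
    and j: "j < n" "j \<noteq> 0"
  shows "(W' * A * W) $$ (0, j) = 0"
proof -
  have Wj: "col W j \<in> carrier_vec n"
    using W j by simp
  have "W' * A * W = W' * (A * W)"
    using W W' A by (simp add: assoc_mult_mat[of W' n n A n W n])
  then have "(W' * A * W) $$ (0, j) = row W' 0 \<bullet> col (A * W) j"
    using W W' A j by simp
  also have "col (A * W) j = A *\<^sub>v col W j"
    by (rule col_mult2[OF A W j(1)])
  also have "row W' 0 \<bullet> (A *\<^sub>v col W j) = 1 / (v \<bullet> v) * ((transpose_mat A *\<^sub>v v) \<bullet> col W j)"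
    unfolding row_W' using v A Wj transpose_vec_mult_scalar[OF A Wj v]
    by (simp add: smult_scalar_prod_distrib[of _ n])
  also have "\<dots> = lam * (row W' 0 \<bullet> col W j)"
    unfolding sym Av row_W' using v Wj by (simp add: smult_scalar_prod_distrib[of _ n])
  also have "row W' 0 \<bullet> col W j = 0"
    using arg_cong[OF W'W, of "\<lambda>M. M $$ (0, j)"] W W' j by simp
  finally show ?thesis
    by simp
qed

lemma symmetric_eigenvector_block:
  fixes A :: "real mat"
  assumes A: "A \<in> carrier_mat n n" and sym: "transpose_mat A = A"
    and ev: "eigenvector A v lam"
  obtains W W' B where "W \<in> carrier_mat n n" "W' \<in> carrier_mat n n"
    and "W' * W = 1\<^sub>m n" "W * W' = 1\<^sub>m n"
    and "row W' 0 = (1 / (v \<bullet> v)) \<cdot>\<^sub>v v" "B \<in> carrier_mat (n - 1) (n - 1)"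
    and "W' * A * W = four_block_mat (mat 1 1 (\<lambda>_. lam)) (0\<^sub>m 1 (n - 1)) (0\<^sub>m (n - 1) 1) B"
proof -
  have v: "v \<in> carrier_vec n" and v0: "v \<noteq> 0\<^sub>v n" and Av: "A *\<^sub>v v = lam \<cdot>\<^sub>v v"
    using ev A by (auto simp: eigenvector_def)
  have n: "n \<noteq> 0" using v v0 by auto
  obtain W W' where W: "W \<in> carrier_mat n n" and W': "W' \<in> carrier_mat n n"
    and W'W: "W' * W = 1\<^sub>m n" and WW': "W * W' = 1\<^sub>m n"
    and row_W': "row W' 0 = (1 / (v \<bullet> v)) \<cdot>\<^sub>v v"
    and col0: "col (W' * A * W) 0 = vec n (\<lambda>i. if i = 0 then lam else 0)"
    using eigenvector_orthogonal_basis[OF A ev] by blast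
  define A' where "A' = W' * A * W"
  note col0 = col0[folded A'_def]
  have A': "A' \<in> carrier_mat n n"
    using W W' A by (simp add: A'_def)
  have row0: "A' $$ (0, j) = 0" if "j < n" "j \<noteq> 0" for j
    unfolding A'_def using symmetric_row0_vanishes[OF A sym W W' W'W row_W' v Av that] .
  obtain A1 A2 A0 B where split: "split_block A' 1 1 = (A1, A2, A0, B)"
    by (cases "split_block A' 1 1") auto
  have dims: "dim_row A' = 1 + (n - 1)" "dim_col A' = 1 + (n - 1)"
    using A' n by auto
  from split_block[OF split dims]
  have B: "B \<in> carrier_mat (n - 1) (n - 1)" and A'_block: "A' = four_block_mat A1 A2 A0 B"
    by auto
  have "A1 = mat 1 1 (\<lambda>_. lam)"
    using split arg_cong[OF col0, of "\<lambda>v. v $ 0"] A' n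
    by (auto simp: split_block_def Let_def col_def)
  moreover have "A' $$ (Suc i, 0) = 0" if "i < n - 1" for i
    using that arg_cong[OF col0, of "\<lambda>v. v $ Suc i"] A' by auto
  then have "A0 = 0\<^sub>m (n - 1) 1"
    using split A' by (auto simp: split_block_def Let_def)
  moreover have "A2 = 0\<^sub>m 1 (n - 1)"
    using split[unfolded split_block_def Let_def] row0 A' by auto
  ultimately show thesis
    using that[OF W W' W'W WW' row_W' B] A'_block by (simp add: A'_def)
qed

lemma eigenvector_block_lift:
  fixes A W W' B :: "'a::field mat"
  assumes A: "A \<in> carrier_mat n n" and W: "W \<in> carrier_mat n n" and W': "W' \<in> carrier_mat n n"
    and W'W: "W' * W = 1\<^sub>m n" and WW': "W * W' = 1\<^sub>m n" and n: "n \<noteq> 0"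
    and B: "B \<in> carrier_mat (n - 1) (n - 1)"
    and block: "W' * A * W = four_block_mat (mat 1 1 (\<lambda>_. lam)) (0\<^sub>m 1 (n - 1)) (0\<^sub>m (n - 1) 1) B"
    and ev: "eigenvector B u lam"
  shows "eigenvector A (W *\<^sub>v (0\<^sub>v 1 @\<^sub>v u)) lam"
proof -
  have u: "u \<in> carrier_vec (n - 1)" "u \<noteq> 0\<^sub>v (n - 1)" "B *\<^sub>v u = lam \<cdot>\<^sub>v u"
    using ev B by (auto simp: eigenvector_def)
  define y where "y = 0\<^sub>v 1 @\<^sub>v u"
  define w where "w = W *\<^sub>v y"
  define A' where "A' = W' * A * W"
  have A': "A' \<in> carrier_mat n n"
    using W W' A by (simp add: A'_def)
  have "y \<in> carrier_vec (1 + (n - 1))"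
    unfolding y_def using u(1) by (rule append_carrier_vec[OF zero_carrier_vec])
  then have y: "y \<in> carrier_vec n"
    using n by simp
  then have w: "w \<in> carrier_vec n"
    using W by (simp add: w_def)
  have Ay: "A' *\<^sub>v y = lam \<cdot>\<^sub>v y"
    unfolding A'_def block y_def
    by (subst mult_mat_vec_split[OF _ B _ u(1)], simp, simp, rule eq_vecI)
      (use u B in \<open>auto simp: scalar_prod_def\<close>)
  have "W * A' = (W * W') * A * W"
    using W W' A by (simp add: A'_def assoc_mult_mat[of _ n n _ n _ n])
  then have AW: "A * W = W * A'"
    using WW' A W by simp
  have "A *\<^sub>v w = (A * W) *\<^sub>v y"
    using A W y by (simp add: w_def)
  also have "\<dots> = W *\<^sub>v (A' *\<^sub>v y)"
    unfolding AW using W A' y by simp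
  also have "\<dots> = lam \<cdot>\<^sub>v w"
    unfolding Ay w_def using mult_mat_vec[OF W y] .
  finally have Aw: "A *\<^sub>v w = lam \<cdot>\<^sub>v w" .
  have "y \<noteq> 0\<^sub>v n"
  proof
    assume "y = 0\<^sub>v n"
    moreover have "y $ Suc i = u $ i" if "i < n - 1" for i
      using that u(1) by (simp add: y_def)
    ultimately have "u $ i = 0" if "i < n - 1" for i
      using that by simp
    then have "u = 0\<^sub>v (n - 1)"
      using u(1) by (intro eq_vecI) auto
    with u(2) show False ..
  qed
  moreover have "y = W' *\<^sub>v w"
    using W W' y W'W by (simp add: w_def assoc_mult_mat_vec[symmetric])
  ultimately have "w \<noteq> 0\<^sub>v n"
    using W' by auto
  then show ?thesis
    using w Aw A by (auto simp: eigenvector_def w_def y_def)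
qed

lemma char_poly_deflate_eigenvector:
  fixes A :: "real mat"
  assumes A: "A \<in> carrier_mat n n" and sym: "transpose_mat A = A"
    and ev: "eigenvector A v lam"
  obtains B where "B \<in> carrier_mat (n - 1) (n - 1)"
    and "char_poly A = [:-lam, 1:] * char_poly B"
    and "\<And>u. eigenvector B u lam \<Longrightarrow> \<exists>w. eigenvector A w lam \<and> v \<bullet> w = 0"
proof -
  have v: "v \<in> carrier_vec n" and v0: "v \<noteq> 0\<^sub>v n"
    using ev A by (auto simp: eigenvector_def)
  have n: "n \<noteq> 0" using v v0 by auto
  obtain W W' B where W: "W \<in> carrier_mat n n" and W': "W' \<in> carrier_mat n n"
    and W'W: "W' * W = 1\<^sub>m n" and WW': "W * W' = 1\<^sub>m n"
    and row_W': "row W' 0 = (1 / (v \<bullet> v)) \<cdot>\<^sub>v v" and B: "B \<in> carrier_mat (n - 1) (n - 1)"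
    and block: "W' * A * W = four_block_mat (mat 1 1 (\<lambda>_. lam)) (0\<^sub>m 1 (n - 1)) (0\<^sub>m (n - 1) 1) B"
    using symmetric_eigenvector_block[OF A sym ev] by blast
  have A': "W' * A * W \<in> carrier_mat n n"
    using W W' A by simp
  have "similar_mat (W' * A * W) A"
    unfolding similar_mat_def using similar_mat_witI[OF W'W WW' refl A' A W' W] by blast
  then have "char_poly A = char_poly (W' * A * W)"
    by (simp add: char_poly_similar)
  also have "\<dots> = char_poly (mat 1 1 (\<lambda>_. lam)) * char_poly B"
    unfolding block by (rule char_poly_four_block_zeros_col[OF _ _ B]) auto
  also have "char_poly (mat 1 1 (\<lambda>_. lam)) = [:-lam, 1:]"
    by (simp add: char_poly_defs det_def sign_def)
  finally have "char_poly A = [:-lam, 1:] * char_poly B" .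
  moreover have "\<exists>w. eigenvector A w lam \<and> v \<bullet> w = 0" if u: "eigenvector B u lam" for u
  proof -
    define w where "w = W *\<^sub>v (0\<^sub>v 1 @\<^sub>v u)"
    have w: "eigenvector A w lam"
      unfolding w_def by (rule eigenvector_block_lift[OF A W W' W'W WW' n B block u])
    then have w_carrier: "w \<in> carrier_vec n"
      using A by (simp add: eigenvector_def)
    have "u \<in> carrier_vec (n - 1)"
      using u B by (simp add: eigenvector_def)
    then have "0\<^sub>v 1 @\<^sub>v u \<in> carrier_vec (1 + (n - 1))"
      by (rule append_carrier_vec[OF zero_carrier_vec])
    then have "0\<^sub>v 1 @\<^sub>v u \<in> carrier_vec n"
      using n by simp
    then have "W' *\<^sub>v w = 0\<^sub>v 1 @\<^sub>v u"
      using W W' W'W by (simp add: w_def assoc_mult_mat_vec[symmetric])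
    then have "0 = (W' *\<^sub>v w) $ 0"
      by simp
    also have "\<dots> = 1 / (v \<bullet> v) * (v \<bullet> w)"
      using W' n row_W' v w_carrier by (simp add: smult_scalar_prod_distrib[of _ n])
    finally have "v \<bullet> w = 0"
      using v v0 scalar_prod_self_eq_0_real[OF v] by simp
    with w show ?thesis
      by blast
  qed
  ultimately show thesis
    using that B by blast
qed

lemma order_char_poly_eq_1_symmetric:
  fixes A :: "real mat"
  assumes A: "A \<in> carrier_mat n n" and sym: "transpose_mat A = A"
    and ev: "eigenvector A v lam"
    and line: "\<And>w. eigenvector A w lam \<Longrightarrow> \<exists>c. w = c \<cdot>\<^sub>v v"
  shows "Polynomial.order lam (char_poly A) = 1"
proof -
  have v: "v \<in> carrier_vec n" "v \<noteq> 0\<^sub>v n"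
    using ev A by (auto simp: eigenvector_def)
  obtain B where B: "B \<in> carrier_mat (n - 1) (n - 1)"
    and char_A: "char_poly A = [:-lam, 1:] * char_poly B"
    and lift: "\<And>u. eigenvector B u lam \<Longrightarrow> \<exists>w. eigenvector A w lam \<and> v \<bullet> w = 0"
    using char_poly_deflate_eigenvector[OF A sym ev] by blast
  have "\<not> eigenvalue B lam"
  proof
    assume "eigenvalue B lam"
    then obtain w where w: "eigenvector A w lam" and "v \<bullet> w = 0"
      using lift by (auto simp: eigenvalue_def)
    moreover obtain c where c: "w = c \<cdot>\<^sub>v v"
      using line[OF w] by blast
    ultimately have "c * (v \<bullet> v) = 0"
      using v by simp
    then have "c = 0"
      using v scalar_prod_self_eq_0_real by auto
    then show False
      using w c A v by (auto simp: eigenvector_def)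
  qed
  then have no_root: "poly (char_poly B) lam \<noteq> 0"
    using eigenvalue_root_char_poly[OF B] by simp
  then have nonzero: "[:-lam, 1:] * char_poly B \<noteq> 0"
    by (metis mult_eq_0_iff pCons_eq_0_iff one_neq_zero poly_0)
  have "Polynomial.order lam [:-lam, 1:] = 1"
    using order_power_n_n[of lam 1] by simp
  then show ?thesis
    unfolding char_A order_mult[OF nonzero] using no_root by (simp add: order_0I)
qed

section \<open>The normalized Laplacian of a connected graph\<close>

lemma vertex_list:
  assumes "finite V"
  shows "distinct (vertex_list V)" "set (vertex_list V) = V"
proof -
  have "\<exists>vs. distinct vs \<and> set vs = V"
    using finite_distinct_list[OF assms] by blast
  then have "distinct (vertex_list V) \<and> set (vertex_list V) = V"
    unfolding vertex_list_def by (rule someI_ex)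
  then show "distinct (vertex_list V)" "set (vertex_list V) = V"
    by auto
qed

lemma nlap_mat_carrier: "nlap_mat vs V E \<in> carrier_mat (length vs) (length vs)"
  by (simp add: nlap_mat_def)

definition nadj :: "'a set \<Rightarrow> ('a \<Rightarrow> 'a \<Rightarrow> bool) \<Rightarrow> 'a \<Rightarrow> 'a \<Rightarrow> real" where
  "nadj V E a b = (if E a b then 1 / sqrt (real (deg V E a) * real (deg V E b)) else 0)"

lemma nlap_mat_index:
  "i < length vs \<Longrightarrow> j < length vs
    \<Longrightarrow> nlap_mat vs V E $$ (i, j) = (if i = j then 1 else 0) - nadj V E (vs ! i) (vs ! j)"
  by (simp add: nlap_mat_def nadj_def)

lemma nadj_sym: "(\<And>a b. R a b \<Longrightarrow> R b a) \<Longrightarrow> nadj X R a b = nadj X R b a"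
  by (auto simp: nadj_def mult.commute)

lemma transpose_nlap_mat:
  assumes "\<And>u v. E u v \<Longrightarrow> E v u"
  shows "transpose_mat (nlap_mat vs V E) = nlap_mat vs V E"
  using assms by (auto simp: nlap_mat_def mult.commute intro!: eq_matI)

lemma char_poly_nlap_mat_reorder:
  assumes "distinct vs" "distinct vs'" "set vs = set vs'"
  shows "char_poly (nlap_mat vs V E) = char_poly (nlap_mat vs' V E)"
proof -
  define n where "n = length vs"
  have len: "length vs' = n"
    using assms by (metis distinct_card n_def)
  define p where "p i = (SOME j. j < n \<and> vs' ! j = vs ! i)" for i
  have p: "p i < n \<and> vs' ! p i = vs ! i" if "i < n" for i
  proof -
    have "\<exists>j. j < n \<and> vs' ! j = vs ! i"
      using that assms(3) len by (metis in_set_conv_nth n_def nth_mem)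
    then show ?thesis
      unfolding p_def by (rule someI_ex)
  qed
  have p_eq_iff: "p i = p j \<longleftrightarrow> i = j" if "i < n" "j < n" for i j
    using p[OF that(1)] p[OF that(2)] assms(1) that by (metis n_def nth_eq_iff_index_eq)
  show ?thesis
  proof (rule char_poly_permute_indices[of _ n _ p])
    show "nlap_mat vs' V E \<in> carrier_mat n n" "nlap_mat vs V E \<in> carrier_mat n n"
      using len by (auto simp: nlap_mat_def n_def)
    show "inj_on p {..<n}"
      using p_eq_iff by (auto intro: inj_onI)
    show "nlap_mat vs V E $$ (i, j) = nlap_mat vs' V E $$ (p i, p j)" if "i < n" "j < n" for i j
      using that p[OF that(1)] p[OF that(2)] p_eq_iff[OF that] len by (simp add: nlap_mat_def n_def)
  qed (use p in blast)
qed

lemma sum_nth_distinct: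
  "distinct xs \<Longrightarrow> (\<Sum>j<length xs. g (xs ! j)) = (\<Sum>x\<in>set xs. g x)"
  using sum.reindex_bij_betw[OF bij_betw_nth[OF _ refl refl], of xs g] by simp

lemma nlap_mat_mult_vec:
  assumes vs: "distinct vs" "set vs = V" and i: "i < length vs"
  shows "(nlap_mat vs V E *\<^sub>v vec (length vs) (\<lambda>j. g (vs ! j))) $ i
    = g (vs ! i) - (\<Sum>v | v \<in> V \<and> E (vs ! i) v. g v / sqrt (deg V E v)) / sqrt (deg V E (vs ! i))"
proof -
  let ?u = "vs ! i" and ?d = "\<lambda>v. sqrt (deg V E v)"
  have "(nlap_mat vs V E *\<^sub>v vec (length vs) (\<lambda>j. g (vs ! j))) $ i
    = (\<Sum>j<length vs. (if i = j then g (vs ! j) else 0)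
        - (if E ?u (vs ! j) then g (vs ! j) / ?d (vs ! j) else 0) / ?d ?u)"
    using i by (auto simp: nlap_mat_def scalar_prod_def real_sqrt_mult atLeast0LessThan
        left_diff_distrib intro!: sum.cong)
  also have "\<dots> = g ?u - (\<Sum>j<length vs. if E ?u (vs ! j) then g (vs ! j) / ?d (vs ! j) else 0) / ?d ?u"
    using i by (simp add: sum_subtractf sum_divide_distrib)
  also have "(\<Sum>j<length vs. if E ?u (vs ! j) then g (vs ! j) / ?d (vs ! j) else 0)
    = (\<Sum>v | v \<in> V \<and> E ?u v. g v / ?d v)"
    using sum_nth_distinct[OF vs(1), of "\<lambda>v. if E ?u v then g v / ?d v else 0"] vs(2)
      sum.inter_filter[of V "\<lambda>v. g v / ?d v" "E ?u"]
    by auto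
  finally show ?thesis .
qed

locale sgraph =
  fixes V :: "'a set" and E :: "'a \<Rightarrow> 'a \<Rightarrow> bool"
  assumes simple: "simple_graph V E"
begin

lemma finite_V: "finite V"
  using simple by (simp add: simple_graph_def)

lemma edge_sym: "E u v \<Longrightarrow> E v u"
  using simple by (simp add: simple_graph_def)

lemma edge_vertices: "E u v \<Longrightarrow> u \<in> V \<and> v \<in> V"
  using simple by (simp add: simple_graph_def)

lemma no_loop [simp]: "\<not> E u u"
  using simple by (auto simp: simple_graph_def)

lemma sum_neighbours_const: "(\<Sum>v | v \<in> V \<and> E u v. c) = of_nat (deg V E u) * c"
  by (simp add: Defs.deg_def)

lemma sum_edges_swap:
  "(\<Sum>u\<in>V. \<Sum>v | v \<in> V \<and> E u v. h u v) = (\<Sum>v\<in>V. \<Sum>u | u \<in> V \<and> E v u. h u v)"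
proof -
  have "{u. u \<in> V \<and> E u v} = {u. u \<in> V \<and> E v u}" for v
    using edge_sym by blast
  then show ?thesis
    using sum.swap_restrict[OF finite_V finite_V, of h E] by simp
qed

text \<open>The sum over all edges of (f u - s f v)^2 equals (1 - s^2) times the sum of
  deg u * (f u)^2, so it vanishes term by term.\<close>

lemma harmonic_edge:
  fixes f :: "'a \<Rightarrow> real" and s :: real
  assumes harmonic: "\<And>u. u \<in> V \<Longrightarrow> (\<Sum>v | v \<in> V \<and> E u v. f v) = s * deg V E u * f u"
    and s: "s * s = 1" and e: "E u v"
  shows "f u = s * f v"
proof -
  define Q where "Q = (\<Sum>u\<in>V. deg V E u * (f u)\<^sup>2)"
  define S where "S h = (\<Sum>u\<in>V. \<Sum>v | v \<in> V \<and> E u v. h u v)" for h :: "'a \<Rightarrow> 'a \<Rightarrow> real"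
  have S_diff: "S (\<lambda>u v. g u v - h u v) = S g - S h" for g h
    by (simp add: S_def sum_subtractf)
  have S_add: "S (\<lambda>u v. g u v + h u v) = S g + S h" for g h
    by (simp add: S_def sum.distrib)
  have S_scale: "S (\<lambda>u v. c * g u v) = c * S g" for c g
    by (simp add: S_def sum_distrib_left)
  have S1: "S (\<lambda>u v. (f u)\<^sup>2) = Q"
    unfolding S_def Q_def sum_neighbours_const by simp
  have S2: "S (\<lambda>u v. (f v)\<^sup>2) = Q"
    unfolding S_def sum_edges_swap Q_def sum_neighbours_const by simp
  have "S (\<lambda>u v. f u * f v) = (\<Sum>u\<in>V. f u * (\<Sum>v | v \<in> V \<and> E u v. f v))"
    by (simp add: S_def sum_distrib_left)
  also have "\<dots> = (\<Sum>u\<in>V. s * (deg V E u * (f u)\<^sup>2))"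
    by (rule sum.cong) (simp_all add: harmonic power2_eq_square)
  finally have S3: "S (\<lambda>u v. f u * f v) = s * Q"
    by (simp add: Q_def sum_distrib_left)
  have "(f u - s * f v)\<^sup>2 = (f u)\<^sup>2 - 2 * s * (f u * f v) + s * s * (f v)\<^sup>2" for u v
    by (simp add: power2_eq_square algebra_simps)
  then have "S (\<lambda>u v. (f u - s * f v)\<^sup>2)
      = S (\<lambda>u v. (f u)\<^sup>2) - 2 * s * S (\<lambda>u v. f u * f v) + s * s * S (\<lambda>u v. (f v)\<^sup>2)"
    by (simp only: S_diff S_add S_scale)
  also have "\<dots> = 0"
    unfolding S1 S2 S3 using s by (simp add: algebra_simps)
  finally have "\<forall>u\<in>V. \<forall>v\<in>{v \<in> V. E u v}. (f u - s * f v)\<^sup>2 = 0"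
    using finite_V by (simp add: S_def sum_nonneg_eq_0_iff sum_nonneg)
  then show ?thesis
    using e edge_vertices[OF e] by auto
qed

abbreviation vlist :: "'a list" where
  "vlist \<equiv> vertex_list V"

lemma distinct_vlist: "distinct vlist" and set_vlist: "set vlist = V"
  using vertex_list[OF finite_V] by auto

lemma vlist_nth_in_V [simp]: "i < length vlist \<Longrightarrow> vlist ! i \<in> V"
  using set_vlist nth_mem by blast

lemma length_vlist: "length vlist = card V"
  using distinct_vlist set_vlist distinct_card by metis

lemma nlap_carrier: "nlap V E \<in> carrier_mat (length vlist) (length vlist)"
  by (simp add: nlap_def nlap_mat_carrier)

lemma transpose_nlap: "transpose_mat (nlap V E) = nlap V E"
  by (simp add: nlap_def transpose_nlap_mat edge_sym)

definition vidx :: "'a \<Rightarrow> nat" where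
  "vidx u = (THE i. i < length vlist \<and> vlist ! i = u)"

lemma vidx_nth: "i < length vlist \<Longrightarrow> vidx (vlist ! i) = i"
  unfolding vidx_def using distinct_vlist by (auto simp: nth_eq_iff_index_eq)

lemma vidx: "u \<in> V \<Longrightarrow> vidx u < length vlist \<and> vlist ! vidx u = u"
  using set_vlist vidx_nth by (metis in_set_conv_nth)

lemma vidx_inj: "u \<in> V \<Longrightarrow> v \<in> V \<Longrightarrow> vidx u = vidx v \<Longrightarrow> u = v"
  by (metis vidx)

end

locale nontrivial_connected_sgraph = sgraph +
  assumes connected: "connected_graph V E" and two_vertices: "card V \<ge> 2"
begin

lemma deg_pos: assumes u: "u \<in> V" shows "deg V E u > 0"
proof -
  have "\<not> V \<subseteq> {u}"
    using two_vertices card_mono[of "{u}" V] by fastforce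
  then obtain w where w: "w \<in> V" "w \<noteq> u"
    by blast
  have "E\<^sup>*\<^sup>* u w"
    using connected u w by (simp add: connected_graph_def)
  then obtain y where "E u y"
    using w(2) by (metis converse_rtranclpE)
  then have "y \<in> {y \<in> V. E u y}"
    using edge_vertices by auto
  moreover have "finite {y \<in> V. E u y}"
    using finite_V by simp
  ultimately show ?thesis
    unfolding Defs.deg_def card_gt_0_iff by blast
qed

lemma edge_invariant_const:
  assumes "\<And>u v. E u v \<Longrightarrow> f u = f v" and "u \<in> V" "v \<in> V"
  shows "f u = f v"
proof -
  have "E\<^sup>*\<^sup>* u v"
    using connected assms(2,3) by (simp add: connected_graph_def)
  then show ?thesis
    by (induction rule: rtranclp_induct) (auto dest: assms(1))
qed

definition sqrt_deg_vec :: "('a \<Rightarrow> real) \<Rightarrow> real vec" where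
  "sqrt_deg_vec f = vec (length vlist) (\<lambda>i. sqrt (deg V E (vlist ! i)) * f (vlist ! i))"

lemma sqrt_deg_vec_carrier: "sqrt_deg_vec f \<in> carrier_vec (length vlist)"
  by (simp add: sqrt_deg_vec_def)

lemma sqrt_deg_vec_cong: "(\<And>u. u \<in> V \<Longrightarrow> f u = g u) \<Longrightarrow> sqrt_deg_vec f = sqrt_deg_vec g"
  by (auto simp: sqrt_deg_vec_def intro!: eq_vecI)

lemma smult_sqrt_deg_vec: "c \<cdot>\<^sub>v sqrt_deg_vec f = sqrt_deg_vec (\<lambda>u. c * f u)"
  by (auto simp: sqrt_deg_vec_def intro!: eq_vecI)

lemma sqrt_deg_vec_eq_iff: "sqrt_deg_vec f = sqrt_deg_vec g \<longleftrightarrow> (\<forall>u\<in>V. f u = g u)"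
proof
  assume eq: "sqrt_deg_vec f = sqrt_deg_vec g"
  show "\<forall>u\<in>V. f u = g u"
  proof
    fix u assume u: "u \<in> V"
    have "sqrt_deg_vec f $ vidx u = sqrt_deg_vec g $ vidx u"
      using eq by simp
    then show "f u = g u"
      using vidx[OF u] deg_pos[OF u] by (simp add: sqrt_deg_vec_def)
  qed
qed (blast intro: sqrt_deg_vec_cong)

lemma sqrt_deg_vec_zero: "sqrt_deg_vec (\<lambda>_. 0) = 0\<^sub>v (length vlist)"
  by (auto simp: sqrt_deg_vec_def)

lemma vec_eq_sqrt_deg_vec:
  assumes w: "w \<in> carrier_vec (length vlist)"
  shows "w = sqrt_deg_vec (\<lambda>u. w $ vidx u / sqrt (deg V E u))"
proof (rule eq_vecI)
  fix i assume "i < dim_vec (sqrt_deg_vec (\<lambda>u. w $ vidx u / sqrt (deg V E u)))"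
  then have i: "i < length vlist"
    by (simp add: sqrt_deg_vec_def)
  then show "w $ i = sqrt_deg_vec (\<lambda>u. w $ vidx u / sqrt (deg V E u)) $ i"
    using deg_pos[OF vlist_nth_in_V[OF i]] by (simp add: sqrt_deg_vec_def vidx_nth)
qed (use w in \<open>simp add: sqrt_deg_vec_def\<close>)

lemma nlap_mult_sqrt_deg_vec:
  "nlap V E *\<^sub>v sqrt_deg_vec f
    = sqrt_deg_vec (\<lambda>u. f u - (\<Sum>v | v \<in> V \<and> E u v. f v) / deg V E u)"
proof (rule eq_vecI)
  fix i assume "i < dim_vec (sqrt_deg_vec (\<lambda>u. f u - (\<Sum>v | v \<in> V \<and> E u v. f v) / deg V E u))"
  then have i: "i < length vlist"
    by (simp add: sqrt_deg_vec_def)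
  define u where "u = vlist ! i"
  define S where "S = (\<Sum>v | v \<in> V \<and> E u v. f v)"
  have d: "deg V E u > 0"
    using deg_pos i by (simp add: u_def)
  have "(\<Sum>v | v \<in> V \<and> E u v. sqrt (deg V E v) * f v / sqrt (deg V E v)) = S"
    unfolding S_def using deg_pos by (intro sum.cong) auto
  then have "(nlap V E *\<^sub>v sqrt_deg_vec f) $ i = sqrt (deg V E u) * f u - S / sqrt (deg V E u)"
    using nlap_mat_mult_vec[OF distinct_vlist set_vlist i, where g = "\<lambda>u. sqrt (deg V E u) * f u" and E = E]
    by (simp add: nlap_def sqrt_deg_vec_def u_def)
  also have "\<dots> = sqrt (deg V E u) * (f u - S / deg V E u)"
    using d by (simp add: field_simps real_sqrt_mult[symmetric])
  finally show "(nlap V E *\<^sub>v sqrt_deg_vec f) $ i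
    = sqrt_deg_vec (\<lambda>u. f u - (\<Sum>v | v \<in> V \<and> E u v. f v) / deg V E u) $ i"
    using i by (simp add: sqrt_deg_vec_def u_def S_def)
qed (simp add: nlap_def nlap_mat_def sqrt_deg_vec_def)

lemma nlap_eigen_sqrt_deg_vec_iff:
  "nlap V E *\<^sub>v sqrt_deg_vec f = (1 - s) \<cdot>\<^sub>v sqrt_deg_vec f
    \<longleftrightarrow> (\<forall>u\<in>V. (\<Sum>v | v \<in> V \<and> E u v. f v) = s * deg V E u * f u)"
proof -
  have "f u - (\<Sum>v | v \<in> V \<and> E u v. f v) / deg V E u = (1 - s) * f u
    \<longleftrightarrow> (\<Sum>v | v \<in> V \<and> E u v. f v) = s * deg V E u * f u" if "u \<in> V" for u
    using deg_pos[OF that] by (auto simp: field_simps)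
  then show ?thesis
    by (simp add: nlap_mult_sqrt_deg_vec smult_sqrt_deg_vec sqrt_deg_vec_eq_iff)
qed

lemma eigenvector_nlap_sqrt_deg_vec_iff:
  "eigenvector (nlap V E) (sqrt_deg_vec f) (1 - s)
    \<longleftrightarrow> (\<exists>u\<in>V. f u \<noteq> 0) \<and> (\<forall>u\<in>V. (\<Sum>v | v \<in> V \<and> E u v. f v) = s * deg V E u * f u)"
proof -
  have "dim_row (nlap V E) = length vlist"
    using nlap_carrier by simp
  moreover have "sqrt_deg_vec f \<noteq> 0\<^sub>v (length vlist) \<longleftrightarrow> (\<exists>u\<in>V. f u \<noteq> 0)"
    using sqrt_deg_vec_eq_iff[of f "\<lambda>_. 0"] by (simp add: sqrt_deg_vec_zero)
  ultimately show ?thesis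
    by (simp add: eigenvector_def sqrt_deg_vec_carrier nlap_eigen_sqrt_deg_vec_iff)
qed

lemma eigenvector_nlapE:
  assumes "eigenvector (nlap V E) w (1 - s)"
  obtains f where "w = sqrt_deg_vec f" and "\<exists>u\<in>V. f u \<noteq> 0"
    and "\<And>u. u \<in> V \<Longrightarrow> (\<Sum>v | v \<in> V \<and> E u v. f v) = s * deg V E u * f u"
proof -
  define f where "f u = w $ vidx u / sqrt (deg V E u)" for u
  have "w \<in> carrier_vec (length vlist)"
    using assms nlap_carrier by (auto simp: eigenvector_def)
  then have w: "w = sqrt_deg_vec f"
    unfolding f_def by (rule vec_eq_sqrt_deg_vec)
  then have "eigenvector (nlap V E) (sqrt_deg_vec f) (1 - s)"
    using assms by simp
  then show thesis
    using that[OF w] unfolding eigenvector_nlap_sqrt_deg_vec_iff by blast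
qed

lemma V_nonempty: "V \<noteq> {}"
  using two_vertices by auto

lemma order_nlap_0: "Polynomial.order 0 (char_poly (nlap V E)) = 1"
proof -
  have ev: "eigenvector (nlap V E) (sqrt_deg_vec (\<lambda>_. 1)) 0"
    using eigenvector_nlap_sqrt_deg_vec_iff[of "\<lambda>_. 1" 1] V_nonempty
    by (auto simp: Defs.deg_def)
  have "\<exists>c. w = c \<cdot>\<^sub>v sqrt_deg_vec (\<lambda>_. 1)" if "eigenvector (nlap V E) w 0" for w
  proof -
    from that have "eigenvector (nlap V E) w (1 - 1)"
      by simp
    then obtain f :: "'a \<Rightarrow> real" where w: "w = sqrt_deg_vec f" and "\<exists>u\<in>V. f u \<noteq> 0"
      and harmonic: "\<And>u. u \<in> V \<Longrightarrow> (\<Sum>v | v \<in> V \<and> E u v. f v) = 1 * real (deg V E u) * f u"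
      by (rule eigenvector_nlapE) blast
    obtain u0 where u0: "u0 \<in> V"
      using V_nonempty by blast
    have "f u = f v" if "E u v" for u v
      using harmonic_edge[OF harmonic _ that] by simp
    then have "f u = f u0" if "u \<in> V" for u
      using edge_invariant_const[where f = f, OF _ that u0] by blast
    then have "w = f u0 \<cdot>\<^sub>v sqrt_deg_vec (\<lambda>_. 1)"
      unfolding w smult_sqrt_deg_vec by (intro sqrt_deg_vec_cong) simp
    then show ?thesis ..
  qed
  then show ?thesis
    by (rule order_char_poly_eq_1_symmetric[OF nlap_carrier transpose_nlap ev])
qed

lemma order_nlap_2_bipartite:
  assumes "bipartite V E"
  shows "Polynomial.order 2 (char_poly (nlap V E)) = 1"
proof -
  obtain P where P: "\<And>u v. E u v \<Longrightarrow> u \<in> P \<longleftrightarrow> v \<notin> P"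
    using assms by (auto simp: bipartite_def)
  define sign where "sign u = (if u \<in> P then 1 else -1 :: real)" for u
  have sign_edge: "sign v = - sign u" if "E u v" for u v
    using P[OF that] by (simp add: sign_def)
  have "(\<Sum>v | v \<in> V \<and> E u v. sign v) = (\<Sum>v | v \<in> V \<and> E u v. - sign u)" for u
    by (rule sum.cong) (auto simp: sign_edge)
  then have "(\<Sum>v | v \<in> V \<and> E u v. sign v) = - 1 * real (deg V E u) * sign u" for u
    by (simp add: Defs.deg_def)
  then have ev: "eigenvector (nlap V E) (sqrt_deg_vec sign) 2"
    using eigenvector_nlap_sqrt_deg_vec_iff[of sign "-1"] V_nonempty by (auto simp: sign_def)
  have "\<exists>c. w = c \<cdot>\<^sub>v sqrt_deg_vec sign" if "eigenvector (nlap V E) w 2" for w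
  proof -
    from that have "eigenvector (nlap V E) w (1 - (-1))"
      by simp
    then obtain f :: "'a \<Rightarrow> real" where w: "w = sqrt_deg_vec f" and "\<exists>u\<in>V. f u \<noteq> 0"
      and harmonic: "\<And>u. u \<in> V \<Longrightarrow> (\<Sum>v | v \<in> V \<and> E u v. f v) = -1 * real (deg V E u) * f u"
      by (rule eigenvector_nlapE) blast
    obtain u0 where u0: "u0 \<in> V"
      using V_nonempty by blast
    have "f u * sign u = f v * sign v" if "E u v" for u v
      using harmonic_edge[OF harmonic _ that] sign_edge[OF that] by simp
    then have "f u * sign u = f u0 * sign u0" if "u \<in> V" for u
      using edge_invariant_const[where f = "\<lambda>u. f u * sign u", OF _ that u0] by blast
    then have "f u = (f u0 * sign u0) * sign u" if "u \<in> V" for u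
      using that by (force simp: sign_def)
    then have "w = (f u0 * sign u0) \<cdot>\<^sub>v sqrt_deg_vec sign"
      unfolding w smult_sqrt_deg_vec by (rule sqrt_deg_vec_cong) simp
    then show ?thesis ..
  qed
  then show ?thesis
    by (rule order_char_poly_eq_1_symmetric[OF nlap_carrier transpose_nlap ev])
qed

text \<open>An eigenvector for 2 gives f with f v = - f u along every edge; then |f| is constant and
  nonzero, and the sign of f is a bipartition.\<close>

lemma order_nlap_2_non_bipartite:
  assumes "\<not> bipartite V E"
  shows "Polynomial.order 2 (char_poly (nlap V E)) = 0"
proof -
  have "\<not> eigenvalue (nlap V E) 2"
  proof
    assume "eigenvalue (nlap V E) 2"
    then obtain w where "eigenvector (nlap V E) w 2"
      by (auto simp: eigenvalue_def)
    then have "eigenvector (nlap V E) w (1 - (-1))"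
      by simp
    then obtain f :: "'a \<Rightarrow> real" where "w = sqrt_deg_vec f" and nonzero: "\<exists>u\<in>V. f u \<noteq> 0"
      and harmonic: "\<And>u. u \<in> V \<Longrightarrow> (\<Sum>v | v \<in> V \<and> E u v. f v) = -1 * real (deg V E u) * f u"
      by (rule eigenvector_nlapE) blast
    obtain u0 where u0: "u0 \<in> V" "f u0 \<noteq> 0"
      using nonzero by blast
    have flip: "f v = - f u" if "E u v" for u v
      using harmonic_edge[OF harmonic _ edge_sym[OF that]] by simp
    have "\<bar>f u\<bar> = \<bar>f u0\<bar>" if "u \<in> V" for u
      using edge_invariant_const[OF _ that u0(1), of "\<lambda>u. \<bar>f u\<bar>"] flip by force
    then have "E u v \<Longrightarrow> u \<in> {u \<in> V. f u > 0} \<longleftrightarrow> v \<notin> {u \<in> V. f u > 0}" for u v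
      using flip[of u v] edge_vertices[of u v] u0(2) by fastforce
    then have "bipartite V E"
      unfolding bipartite_def by blast
    with assms show False ..
  qed
  then show ?thesis
    using eigenvalue_root_char_poly[OF nlap_carrier] by (simp add: order_0I)
qed

end

section \<open>The subdivision graph\<close>

fun twin :: "'a sub_vertex \<Rightarrow> 'a sub_vertex" where
  "twin (Orig u) = Orig u"
| "twin (Mid u v i) = Mid v u i"

lemma twin_twin [simp]: "twin (twin a) = a"
  by (cases a) auto

lemma inj_twin: "inj twin"
  by (metis injI twin_twin)

locale subdivision = nontrivial_connected_sgraph V E for V :: "'a set" and E +
  fixes k :: nat
  assumes k: "k \<ge> 1"
begin

abbreviation SV :: "'a sub_vertex set" where
  "SV \<equiv> sub_vertices k V E"

abbreviation SE :: "'a sub_vertex \<Rightarrow> 'a sub_vertex \<Rightarrow> bool" where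
  "SE \<equiv> sub_edge k E"

definition mids :: "'a sub_vertex set" where
  "mids = {Mid u v i | u v i. E u v \<and> i < k}"

definition half_mids :: "'a sub_vertex set" where
  "half_mids = {Mid u v i | u v i. E u v \<and> i < k \<and> vidx u < vidx v}"

lemma sub_vertices_eq: "SV = Orig ` V \<union> mids"
  by (simp add: sub_vertices_def mids_def)

lemma twin_mids: "m \<in> mids \<Longrightarrow> twin m \<in> mids"
  by (auto simp: mids_def dest: edge_sym)

lemma mids_split: "mids = half_mids \<union> twin ` half_mids" "half_mids \<inter> twin ` half_mids = {}"
proof -
  show "half_mids \<inter> twin ` half_mids = {}"
    by (auto simp: half_mids_def)
  have "mids \<subseteq> half_mids \<union> twin ` half_mids"
  proof
    fix m assume "m \<in> mids"
    then obtain u v i where m: "m = Mid u v i" "E u v" "i < k"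
      by (auto simp: mids_def)
    have "u \<noteq> v"
      using m(2) by auto
    then have "vidx u \<noteq> vidx v"
      using edge_vertices[OF m(2)] vidx_inj by blast
    then consider "vidx u < vidx v" | "vidx v < vidx u"
      by linarith
    then show "m \<in> half_mids \<union> twin ` half_mids"
    proof cases
      case 1
      then show ?thesis using m by (auto simp: half_mids_def)
    next
      case 2
      then have "Mid v u i \<in> half_mids"
        using m edge_sym by (auto simp: half_mids_def)
      moreover have "m = twin (Mid v u i)"
        using m by simp
      ultimately show ?thesis
        by blast
    qed
  qed
  moreover have "half_mids \<union> twin ` half_mids \<subseteq> mids"
    by (auto simp: half_mids_def mids_def dest: edge_sym)
  ultimately show "mids = half_mids \<union> twin ` half_mids"
    by blast
qed

lemma finite_mids: "finite mids"
proof -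
  have "mids \<subseteq> (\<lambda>(u, v, i). Mid u v i) ` (V \<times> V \<times> {..<k})"
    by (auto simp: mids_def image_iff dest: edge_vertices)
  then show ?thesis
    using finite_V by (auto intro: finite_subset)
qed

lemma finite_half_mids: "finite half_mids"
  using finite_mids mids_split(1) by (metis finite_Un)

lemma sub_edge_Mid: "E u v \<Longrightarrow> i < k \<Longrightarrow> SE (Mid u v i) y \<longleftrightarrow> y = Orig u \<or> y = Mid v u i"
  by (cases y) auto

lemma sub_edge_Orig: "SE (Orig u) y \<longleftrightarrow> (\<exists>v i. y = Mid u v i \<and> E u v \<and> i < k)"
  by (cases y) auto

lemma sub_edge_sym: "SE a b \<Longrightarrow> SE b a"
  by (cases a; cases b) (auto dest: edge_sym)

lemma neighbours_Orig:
  assumes "u \<in> V"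
  shows "{m \<in> mids. SE (Orig u) m} = (\<lambda>(v, i). Mid u v i) ` ({v \<in> V. E u v} \<times> {..<k})"
    and "inj_on (\<lambda>(v, i). Mid u v i) ({v \<in> V. E u v} \<times> {..<k})"
  by (auto simp: sub_edge_Orig mids_def inj_on_def dest: edge_vertices)

lemma deg_Orig: assumes u: "u \<in> V" shows "deg SV SE (Orig u) = k * deg V E u"
proof -
  have "{y \<in> SV. SE (Orig u) y} = {m \<in> mids. SE (Orig u) m}"
    by (auto simp: sub_vertices_eq sub_edge_Orig mids_def)
  then have "deg SV SE (Orig u) = card ({v \<in> V. E u v} \<times> {..<k})"
    unfolding Defs.deg_def neighbours_Orig[OF u] by (simp add: card_image neighbours_Orig(2)[OF u])
  also have "\<dots> = k * deg V E u"
    using finite_V by (simp add: card_cartesian_product Defs.deg_def)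
  finally show ?thesis .
qed

lemma deg_Mid: assumes m: "m \<in> mids" shows "deg SV SE m = 2"
proof -
  obtain u v i where m_eq: "m = Mid u v i" and uv: "E u v" and i: "i < k"
    using m by (auto simp: mids_def)
  have "{y \<in> SV. SE m y} = {Orig u, Mid v u i}"
    using m_eq uv i edge_vertices[OF uv] edge_sym[OF uv]
    by (auto simp: sub_edge_Mid sub_vertices_eq mids_def)
  then show ?thesis
    unfolding Defs.deg_def by simp
qed

lemma card_half_mids: "card half_mids = k * num_edges E"
proof -
  define OE where "OE = {(u, v). E u v \<and> vidx u < vidx v}"
  have "OE \<subseteq> V \<times> V"
    by (auto simp: OE_def dest: edge_vertices)
  then have "finite OE"
    using finite_V by (metis finite_SigmaI finite_subset)
  have "half_mids = (\<lambda>((u, v), i). Mid u v i) ` (OE \<times> {..<k})"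
    by (auto simp: half_mids_def OE_def image_iff)
  moreover have "inj_on (\<lambda>((u, v), i). Mid u v i) (OE \<times> {..<k})"
    by (auto simp: inj_on_def)
  ultimately have "card half_mids = card OE * k"
    by (simp add: card_image card_cartesian_product)
  moreover have "bij_betw (\<lambda>(u, v). {u, v}) OE (edge_set E)"
  proof (rule bij_betwI')
    show "((case x of (u, v) \<Rightarrow> {u, v}) = (case y of (u, v) \<Rightarrow> {u, v})) = (x = y)"
      if "x \<in> OE" "y \<in> OE" for x y
      using that by (auto simp: OE_def doubleton_eq_iff)
    show "(case x of (u, v) \<Rightarrow> {u, v}) \<in> edge_set E" if "x \<in> OE" for x
      using that by (auto simp: OE_def edge_set_def)
    show "\<exists>x\<in>OE. e = (case x of (u, v) \<Rightarrow> {u, v})" if edge: "e \<in> edge_set E" for e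
    proof -
      obtain u v where e: "e = {u, v}" and uv: "E u v"
        using edge by (auto simp: edge_set_def)
      have "u \<noteq> v"
        using uv by auto
      then have "vidx u \<noteq> vidx v"
        using edge_vertices[OF uv] vidx_inj by blast
      then consider "vidx u < vidx v" | "vidx v < vidx u"
        by linarith
      then show ?thesis
        by cases (use e uv edge_sym[OF uv] in \<open>auto simp: OE_def intro!: bexI[of _ "(v, u)"]\<close>)
    qed
  qed
  then have "card OE = num_edges E"
    unfolding num_edges_def by (rule bij_betw_same_card)
  ultimately show ?thesis
    by simp
qed

lemma nadj_Orig_Orig [simp]: "nadj SV SE (Orig u) (Orig w) = 0"
  by (simp add: nadj_def)

lemma nadj_Orig_mid:
  assumes "u \<in> V" and "m \<in> mids"
  shows "nadj SV SE (Orig u) m = (if SE (Orig u) m then 1 / sqrt (2 * k * deg V E u) else 0)"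
  using deg_Orig[OF assms(1)] deg_Mid[OF assms(2)] by (simp add: nadj_def mult.commute)

lemma nadj_mid_Orig:
  assumes "u \<in> V" and "m \<in> mids"
  shows "nadj SV SE m (Orig u) = (if SE (Orig u) m then 1 / sqrt (2 * k * deg V E u) else 0)"
  using nadj_Orig_mid[OF assms] nadj_sym[of SE, OF sub_edge_sym] by metis

lemma nadj_mid_mid:
  assumes m: "m \<in> mids" and m': "m' \<in> mids"
  shows "nadj SV SE m m' = (if m' = twin m then 1/2 else 0)"
proof -
  obtain u v i where "m = Mid u v i" "E u v" "i < k"
    using m by (auto simp: mids_def)
  then have "SE m m' \<longleftrightarrow> m' = twin m"
    using m' by (auto simp: sub_edge_Mid mids_def)
  moreover have "sqrt (2 * 2) = (2::real)"
    by simp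
  ultimately show ?thesis
    using deg_Mid[OF m] deg_Mid[OF m'] by (cases "m' = twin m") (simp_all add: nadj_def)
qed

lemma sum_mids_Orig:
  assumes u: "u \<in> V"
  shows "(\<Sum>m\<in>mids. nadj SV SE (Orig u) m * g m)
    = (\<Sum>v | v \<in> V \<and> E u v. \<Sum>i<k. g (Mid u v i)) / sqrt (2 * k * deg V E u)"
proof -
  have "(\<Sum>m\<in>mids. nadj SV SE (Orig u) m * g m) = (\<Sum>m | m \<in> mids \<and> SE (Orig u) m. nadj SV SE (Orig u) m * g m)"
    using finite_mids by (intro sum.mono_neutral_right) (auto simp: nadj_def)
  also have "\<dots> = (\<Sum>m | m \<in> mids \<and> SE (Orig u) m. g m) / sqrt (2 * k * deg V E u)"
    by (simp add: nadj_Orig_mid[OF u] sum_divide_distrib)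
  also have "(\<Sum>m | m \<in> mids \<and> SE (Orig u) m. g m) = (\<Sum>(v, i)\<in>{v \<in> V. E u v} \<times> {..<k}. g (Mid u v i))"
    unfolding neighbours_Orig[OF u] by (subst sum.reindex[OF neighbours_Orig(2)[OF u]]) (simp add: case_prod_unfold)
  also have "\<dots> = (\<Sum>v | v \<in> V \<and> E u v. \<Sum>i<k. g (Mid u v i))"
    by (rule sum.cartesian_product[symmetric])
  finally show ?thesis .
qed

lemma sum_nadj_Orig_mid_Orig:
  assumes u: "u \<in> V" and w: "w \<in> V"
  shows "(\<Sum>m\<in>mids. nadj SV SE (Orig u) m * nadj SV SE m (Orig w)) = (if u = w then 1/2 else 0)"
proof -
  have du: "deg V E u > 0" and dw: "deg V E w > 0" and k: "real k > 0"
    using deg_pos[OF u] deg_pos[OF w] k by auto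
  have "nadj SV SE (Mid u v i) (Orig w) = (if u = w then 1 / sqrt (2 * k * deg V E u) else 0)"
    if "E u v" "i < k" for v i
    using that nadj_mid_Orig[OF w, of "Mid u v i"] by (auto simp: mids_def)
  then have "(\<Sum>m\<in>mids. nadj SV SE (Orig u) m * nadj SV SE m (Orig w))
      = (\<Sum>v | v \<in> V \<and> E u v. \<Sum>i<k. if u = w then 1 / sqrt (2 * k * deg V E u) else 0)
        / sqrt (2 * k * deg V E u)"
    unfolding sum_mids_Orig[OF u] by (intro arg_cong[where f = "\<lambda>x. x / _"] sum.cong) auto
  also have "\<dots> = (if u = w then deg V E u * k / (sqrt (2 * k * deg V E u))\<^sup>2 else 0)"
    by (simp add: Defs.deg_def power2_eq_square)
  also have "\<dots> = (if u = w then 1/2 else 0)"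
    using du dw k by simp
  finally show ?thesis .
qed

lemma sum_nadj_Orig_twin_Orig:
  assumes u: "u \<in> V" and w: "w \<in> V"
  shows "(\<Sum>m\<in>mids. nadj SV SE (Orig u) m * nadj SV SE (twin m) (Orig w)) = nadj V E u w / 2"
proof -
  have k: "real k > 0"
    using k by simp
  have "nadj SV SE (Mid v u i) (Orig w) = (if v = w then 1 / sqrt (2 * k * deg V E w) else 0)"
    if "E u v" "i < k" for v i
    using that edge_sym nadj_mid_Orig[OF w, of "Mid v u i"] by (auto simp: mids_def)
  then have "(\<Sum>m\<in>mids. nadj SV SE (Orig u) m * nadj SV SE (twin m) (Orig w))
      = (\<Sum>v | v \<in> V \<and> E u v. \<Sum>i<k. if v = w then 1 / sqrt (2 * k * deg V E w) else 0)
        / sqrt (2 * k * deg V E u)"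
    unfolding sum_mids_Orig[OF u] by (intro arg_cong[where f = "\<lambda>x. x / _"] sum.cong) auto
  also have "\<dots> = (if E u w then k / (sqrt (2 * k * deg V E w) * sqrt (2 * k * deg V E u)) else 0)"
  proof -
    have "(\<Sum>v | v \<in> V \<and> E u v. \<Sum>i<k. if v = w then 1 / sqrt (2 * k * deg V E w) else 0)
      = (\<Sum>v | v \<in> V \<and> E u v. if v = w then k / sqrt (2 * k * deg V E w) else 0)"
      by (rule sum.cong) auto
    also have "\<dots> = (if E u w then k / sqrt (2 * k * deg V E w) else 0)"
      using finite_V w by (subst sum.delta) auto
    finally show ?thesis
      by simp
  qed
  also have "\<dots> = nadj V E u w / 2"
  proof -
    have "real (2 * k * deg V E w) * real (2 * k * deg V E u)
        = (2 * real k)\<^sup>2 * (real (deg V E u) * real (deg V E w))"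
      by (simp add: power2_eq_square)
    then have "sqrt (2 * k * deg V E w) * sqrt (2 * k * deg V E u)
        = sqrt ((2 * real k)\<^sup>2 * (real (deg V E u) * real (deg V E w)))"
      by (simp only: real_sqrt_mult[symmetric])
    also have "\<dots> = 2 * real k * sqrt (real (deg V E u) * real (deg V E w))"
      by (simp only: real_sqrt_mult real_sqrt_abs)
    finally show ?thesis
      using k by (simp add: nadj_def)
  qed
  finally show ?thesis .
qed

definition half_list :: "'a sub_vertex list" where
  "half_list = vertex_list half_mids"

abbreviation npaths :: nat where
  "npaths \<equiv> length half_list"

definition mid_list :: "'a sub_vertex list" where
  "mid_list = half_list @ map twin half_list"

definition sub_list :: "'a sub_vertex list" where
  "sub_list = map Orig vlist @ mid_list"

lemma half_list: "distinct half_list" "set half_list = half_mids"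
  using vertex_list[OF finite_half_mids] by (auto simp: half_list_def)

lemma npaths_eq: "npaths = k * num_edges E"
  using half_list card_half_mids distinct_card by metis

lemma mid_list: "distinct mid_list" "set mid_list = mids" "length mid_list = 2 * npaths"
  using half_list mids_split inj_on_subset[OF inj_twin]
  by (auto simp: mid_list_def distinct_map)

lemma mid_list_nth_mids: "a < 2 * npaths \<Longrightarrow> mid_list ! a \<in> mids"
  using mid_list by (metis nth_mem)

lemma twin_mid_list_nth:
  assumes "a < 2 * npaths"
  shows "twin (mid_list ! a) = mid_list ! (if a < npaths then a + npaths else a - npaths)"
  using assms by (auto simp: mid_list_def nth_append)

lemma mid_list_twin_iff:
  assumes a: "a < 2 * npaths" and b: "b < 2 * npaths"
  shows "mid_list ! b = twin (mid_list ! a) \<longleftrightarrow> b = (if a < npaths then a + npaths else a - npaths)"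
proof -
  define c where "c = (if a < npaths then a + npaths else a - npaths)"
  have "c < 2 * npaths"
    using a by (auto simp: c_def)
  then show ?thesis
    using twin_mid_list_nth[OF a] mid_list(1,3) b by (simp add: c_def[symmetric] nth_eq_iff_index_eq)
qed

lemma sub_list: "distinct sub_list" "set sub_list = SV" "length sub_list = length vlist + 2 * npaths"
  using mid_list distinct_vlist set_vlist sub_vertices_eq
  by (auto simp: sub_list_def distinct_map mids_def inj_on_def)

lemma char_poly_nlap_sub: "char_poly (nlap SV SE) = char_poly (nlap_mat sub_list SV SE)"
proof -
  have "finite SV"
    using sub_list(2) by (metis List.finite_set)
  then show ?thesis
    unfolding nlap_def using vertex_list sub_list by (intro char_poly_nlap_mat_reorder) auto
qed

definition adj_orig_mid :: "real mat" where
  "adj_orig_mid = mat (length vlist) (2 * npaths) (\<lambda>(i, a). nadj SV SE (Orig (vlist ! i)) (mid_list ! a))"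

definition adj_mid_orig :: "real mat" where
  "adj_mid_orig = mat (2 * npaths) (length vlist) (\<lambda>(a, j). nadj SV SE (mid_list ! a) (Orig (vlist ! j)))"

definition mid_block :: "real \<Rightarrow> real mat" where
  "mid_block t = mat (2 * npaths) (2 * npaths)
     (\<lambda>(a, b). (if a = b then t else 0) + nadj SV SE (mid_list ! a) (mid_list ! b))"

lemma char_matrix_sub_block:
  "- char_matrix (nlap_mat sub_list SV SE) x
    = four_block_mat ((x - 1) \<cdot>\<^sub>m 1\<^sub>m (length vlist)) adj_orig_mid adj_mid_orig (mid_block (x - 1))"
proof (rule eq_matI)
  let ?n = "length vlist"
  fix i j assume "i < dim_row (four_block_mat ((x - 1) \<cdot>\<^sub>m 1\<^sub>m ?n) adj_orig_mid adj_mid_orig (mid_block (x - 1)))"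
    "j < dim_col (four_block_mat ((x - 1) \<cdot>\<^sub>m 1\<^sub>m ?n) adj_orig_mid adj_mid_orig (mid_block (x - 1)))"
  then have ij: "i < ?n + 2 * npaths" "j < ?n + 2 * npaths"
    by (auto simp: mid_block_def)
  have sub_nth: "sub_list ! l = (if l < ?n then Orig (vlist ! l) else mid_list ! (l - ?n))"
    if "l < ?n + 2 * npaths" for l
    by (simp add: sub_list_def nth_append)
  have "(- char_matrix (nlap_mat sub_list SV SE) x) $$ (i, j)
      = (x - 1) * (if i = j then 1 else 0) + nadj SV SE (sub_list ! i) (sub_list ! j)"
    using ij sub_list(3) by (simp add: char_matrix_def nlap_mat_index nlap_mat_carrier[THEN carrier_matD(1)])
  then show "(- char_matrix (nlap_mat sub_list SV SE) x) $$ (i, j)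
      = four_block_mat ((x - 1) \<cdot>\<^sub>m 1\<^sub>m ?n) adj_orig_mid adj_mid_orig (mid_block (x - 1)) $$ (i, j)"
    using ij by (auto simp: sub_nth adj_orig_mid_def adj_mid_orig_def mid_block_def)
qed (use sub_list(3) in \<open>auto simp: char_matrix_def nlap_mat_def mid_block_def\<close>)

lemma mid_block_four_block:
  "mid_block t = four_block_mat (t \<cdot>\<^sub>m 1\<^sub>m npaths) ((1/2) \<cdot>\<^sub>m 1\<^sub>m npaths)
     ((1/2) \<cdot>\<^sub>m 1\<^sub>m npaths) (t \<cdot>\<^sub>m 1\<^sub>m npaths)"
proof (rule eq_matI)
  fix a b assume "a < dim_row (four_block_mat (t \<cdot>\<^sub>m 1\<^sub>m npaths) ((1/2) \<cdot>\<^sub>m 1\<^sub>m npaths)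
     ((1/2) \<cdot>\<^sub>m 1\<^sub>m npaths) (t \<cdot>\<^sub>m (1\<^sub>m npaths :: real mat)))"
    "b < dim_col (four_block_mat (t \<cdot>\<^sub>m 1\<^sub>m npaths) ((1/2) \<cdot>\<^sub>m 1\<^sub>m npaths)
     ((1/2) \<cdot>\<^sub>m 1\<^sub>m npaths) (t \<cdot>\<^sub>m (1\<^sub>m npaths :: real mat)))"
  then have ab: "a < 2 * npaths" "b < 2 * npaths"
    by auto
  have "nadj SV SE (mid_list ! a) (mid_list ! b) = (if b = (if a < npaths then a + npaths else a - npaths) then 1/2 else 0)"
    using nadj_mid_mid[OF mid_list_nth_mids[OF ab(1)] mid_list_nth_mids[OF ab(2)]] mid_list_twin_iff[OF ab]
    by simp
  then show "mid_block t $$ (a, b) = four_block_mat (t \<cdot>\<^sub>m 1\<^sub>m npaths) ((1/2) \<cdot>\<^sub>m 1\<^sub>m npaths)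
     ((1/2) \<cdot>\<^sub>m 1\<^sub>m npaths) (t \<cdot>\<^sub>m 1\<^sub>m npaths) $$ (a, b)"
    using ab by (cases "a < npaths"; cases "b < npaths"; simp add: mid_block_def; linarith)
qed (auto simp: mid_block_def)

lemma smult_one_mult_smult_one: "((a::real) \<cdot>\<^sub>m 1\<^sub>m n) * (b \<cdot>\<^sub>m 1\<^sub>m n) = (a * b) \<cdot>\<^sub>m 1\<^sub>m n"
proof -
  have "(a \<cdot>\<^sub>m 1\<^sub>m n) * (b \<cdot>\<^sub>m 1\<^sub>m n) = a \<cdot>\<^sub>m (1\<^sub>m n * (b \<cdot>\<^sub>m 1\<^sub>m n))"
    by (rule mult_smult_assoc_mat) auto
  then show ?thesis
    by (auto intro!: eq_matI)
qed

lemma det_mid_block: "det (mid_block t) = (t * t - 1/4) ^ npaths"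
proof -
  have "det (mid_block t) = det (t \<cdot>\<^sub>m 1\<^sub>m npaths * (t \<cdot>\<^sub>m 1\<^sub>m npaths) - (1/2) \<cdot>\<^sub>m 1\<^sub>m npaths * ((1/2) \<cdot>\<^sub>m 1\<^sub>m npaths))"
    unfolding mid_block_four_block
    by (rule det_four_block_mat) (auto simp: smult_one_mult_smult_one mult.commute)
  also have "\<dots> = det ((t * t - 1/4) \<cdot>\<^sub>m (1\<^sub>m npaths :: real mat))"
    unfolding smult_one_mult_smult_one by (intro arg_cong[where f = det] eq_matI) auto
  finally show ?thesis
    by simp
qed

text \<open>The mid block is t I + P/2 for the involution P exchanging twins, so it is inverted by
  (t I - P/2) / (t^2 - 1/4); mid_solve t is this inverse applied to adj_mid_orig.\<close>

definition mid_solve_entry :: "real \<Rightarrow> 'a \<Rightarrow> 'a sub_vertex \<Rightarrow> real" where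
  "mid_solve_entry t w m = (t * nadj SV SE m (Orig w) - 1/2 * nadj SV SE (twin m) (Orig w)) / (t * t - 1/4)"

definition mid_solve :: "real \<Rightarrow> real mat" where
  "mid_solve t = mat (2 * npaths) (length vlist) (\<lambda>(a, j). mid_solve_entry t (vlist ! j) (mid_list ! a))"

lemma mid_solve_entry_twin:
  assumes t: "t * t \<noteq> 1/4"
  shows "t * mid_solve_entry t w m + 1/2 * mid_solve_entry t w (twin m) = nadj SV SE m (Orig w)"
proof -
  define D where "D = t * t - 1/4"
  have "t * ((t * A - 1/2 * B) / D) + 1/2 * ((t * B - 1/2 * A) / D) = A" for A B
  proof -
    have "t * ((t * A - 1/2 * B) / D) + 1/2 * ((t * B - 1/2 * A) / D)
        = (t * (t * A - 1/2 * B) + 1/2 * (t * B - 1/2 * A)) / D"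
      by (simp add: add_divide_distrib)
    also have "t * (t * A - 1/2 * B) + 1/2 * (t * B - 1/2 * A) = A * D"
      unfolding D_def by (simp add: algebra_simps)
    finally show ?thesis
      using t by (simp add: D_def)
  qed
  then show ?thesis
    by (simp add: mid_solve_entry_def D_def)
qed

lemma mid_block_mult_mid_solve:
  assumes t: "t * t \<noteq> 1/4"
  shows "mid_block t * mid_solve t = adj_mid_orig"
proof (rule eq_matI)
  fix a j assume "a < dim_row adj_mid_orig" "j < dim_col adj_mid_orig"
  then have a: "a < 2 * npaths" and j: "j < length vlist"
    by (auto simp: adj_mid_orig_def)
  define m where "m = mid_list ! a"
  define w where "w = vlist ! j"
  have m: "m \<in> mids"
    unfolding m_def using mid_list_nth_mids[OF a] .
  have "(mid_block t * mid_solve t) $$ (a, j)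
      = (\<Sum>b = 0..<2 * npaths. ((if a = b then t else 0) + nadj SV SE m (mid_list ! b)) * mid_solve_entry t w (mid_list ! b))"
    using a j by (simp add: mid_block_def mid_solve_def scalar_prod_def m_def w_def)
  also have "\<dots> = t * mid_solve_entry t w m + (\<Sum>b = 0..<2 * npaths. nadj SV SE m (mid_list ! b) * mid_solve_entry t w (mid_list ! b))"
    using a by (simp add: sum.distrib distrib_right if_distrib[of "\<lambda>z. z * _"] m_def cong: if_cong)
  also have "(\<Sum>b = 0..<2 * npaths. nadj SV SE m (mid_list ! b) * mid_solve_entry t w (mid_list ! b))
      = (\<Sum>m'\<in>mids. nadj SV SE m m' * mid_solve_entry t w m')"
    using sum_nth_distinct[OF mid_list(1), of "\<lambda>m'. nadj SV SE m m' * mid_solve_entry t w m'"] mid_list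
    by (simp add: atLeast0LessThan)
  also have "\<dots> = (\<Sum>m'\<in>mids. if m' = twin m then 1/2 * mid_solve_entry t w m' else 0)"
    by (rule sum.cong) (auto simp: nadj_mid_mid[OF m])
  also have "\<dots> = 1/2 * mid_solve_entry t w (twin m)"
    using finite_mids twin_mids[OF m] by simp
  also have "t * mid_solve_entry t w m + 1/2 * mid_solve_entry t w (twin m) = nadj SV SE m (Orig w)"
    by (rule mid_solve_entry_twin[OF t])
  finally show "(mid_block t * mid_solve t) $$ (a, j) = adj_mid_orig $$ (a, j)"
    using a j by (simp add: adj_mid_orig_def m_def w_def)
qed (auto simp: mid_block_def mid_solve_def adj_mid_orig_def)

text \<open>This is where the cubic comes from: with x = t + 1,
  t (4 t^2 - 1) - 2 t + 1 = 4 t^3 - 3 t + 1 = 4 x^3 - 12 x^2 + 9 x.\<close>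

lemma schur_entry_identity:
  fixes t d e :: real
  assumes t: "t * t \<noteq> 1/4"
  shows "t * d - (t * (d / 2) - 1/2 * (e / 2)) / (t * t - 1/4)
    = 1 / (4 * t * t - 1) * (poly subdiv_cubic (t + 1) * d - (d - e))"
proof -
  have t': "t * t - 1/4 \<noteq> 0" "4 * t * t - 1 \<noteq> 0"
    using t by auto
  have "t * d - (t * (d / 2) - 1/2 * (e / 2)) / (t * t - 1/4)
      = (t * d * (4 * t * t - 1) - (2 * t * d - e)) / (4 * t * t - 1)"
    using t' by (simp add: field_simps)
  also have "t * d * (4 * t * t - 1) - (2 * t * d - e) = poly subdiv_cubic (t + 1) * d - (d - e)"
    by (simp add: poly_subdiv_cubic algebra_simps power2_eq_square power3_eq_cube)
  finally show ?thesis
    by simp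
qed

lemma schur_complement_mid_block:
  assumes t: "t * t \<noteq> 1/4"
  shows "t \<cdot>\<^sub>m 1\<^sub>m (length vlist) - adj_orig_mid * mid_solve t
    = (1 / (4 * t * t - 1)) \<cdot>\<^sub>m (- char_matrix (nlap V E) (poly subdiv_cubic (t + 1)))"
proof (rule eq_matI)
  fix i j assume "i < dim_row ((1 / (4 * t * t - 1)) \<cdot>\<^sub>m (- char_matrix (nlap V E) (poly subdiv_cubic (t + 1))))"
    "j < dim_col ((1 / (4 * t * t - 1)) \<cdot>\<^sub>m (- char_matrix (nlap V E) (poly subdiv_cubic (t + 1))))"
  then have ij: "i < length vlist" "j < length vlist"
    using nlap_carrier by (auto simp: char_matrix_def)
  define u where "u = vlist ! i"
  define w where "w = vlist ! j"
  have uw: "u \<in> V" "w \<in> V"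
    using ij by (simp_all add: u_def w_def)
  have u_eq_w: "u = w \<longleftrightarrow> i = j"
    using distinct_vlist ij by (simp add: u_def w_def nth_eq_iff_index_eq)
  have "(adj_orig_mid * mid_solve t) $$ (i, j) = (\<Sum>a = 0..<2 * npaths. nadj SV SE (Orig u) (mid_list ! a) * mid_solve_entry t w (mid_list ! a))"
    using ij by (simp add: adj_orig_mid_def mid_solve_def scalar_prod_def u_def w_def)
  also have "\<dots> = (\<Sum>m\<in>mids. nadj SV SE (Orig u) m * mid_solve_entry t w m)"
    using sum_nth_distinct[OF mid_list(1), of "\<lambda>m. nadj SV SE (Orig u) m * mid_solve_entry t w m"] mid_list
    by (simp add: atLeast0LessThan)
  also have "\<dots> = (t * (\<Sum>m\<in>mids. nadj SV SE (Orig u) m * nadj SV SE m (Orig w))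
      - 1/2 * (\<Sum>m\<in>mids. nadj SV SE (Orig u) m * nadj SV SE (twin m) (Orig w))) / (t * t - 1/4)"
    by (simp add: mid_solve_entry_def sum_divide_distrib[symmetric] sum_subtractf sum_distrib_left
        algebra_simps)
  also have "\<dots> = (t * ((if i = j then 1 else 0) / 2) - 1/2 * (nadj V E u w / 2)) / (t * t - 1/4)"
    unfolding sum_nadj_Orig_mid_Orig[OF uw] sum_nadj_Orig_twin_Orig[OF uw] u_eq_w by simp
  finally have "(t \<cdot>\<^sub>m 1\<^sub>m (length vlist) - adj_orig_mid * mid_solve t) $$ (i, j)
      = t * (if i = j then 1 else 0) - (t * ((if i = j then 1 else 0) / 2) - 1/2 * (nadj V E u w / 2)) / (t * t - 1/4)"
    using ij by (simp add: adj_orig_mid_def mid_solve_def)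
  also have "\<dots> = 1 / (4 * t * t - 1) * (poly subdiv_cubic (t + 1) * (if i = j then 1 else 0)
      - ((if i = j then 1 else 0) - nadj V E u w))"
    by (rule schur_entry_identity[OF t])
  also have "\<dots> = ((1 / (4 * t * t - 1)) \<cdot>\<^sub>m (- char_matrix (nlap V E) (poly subdiv_cubic (t + 1)))) $$ (i, j)"
    using ij nlap_carrier by (simp add: char_matrix_def nlap_def nlap_mat_index u_def w_def)
  finally show "(t \<cdot>\<^sub>m 1\<^sub>m (length vlist) - adj_orig_mid * mid_solve t) $$ (i, j)
      = ((1 / (4 * t * t - 1)) \<cdot>\<^sub>m (- char_matrix (nlap V E) (poly subdiv_cubic (t + 1)))) $$ (i, j)" .
qed (use nlap_carrier in \<open>auto simp: char_matrix_def adj_orig_mid_def mid_solve_def\<close>)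

lemma poly_char_poly_sub:
  assumes t: "t * t \<noteq> 1/4"
  shows "poly (char_poly (nlap SV SE)) (t + 1)
    = (t * t - 1/4) ^ npaths * (1 / (4 * t * t - 1)) ^ length vlist
      * poly (char_poly (nlap V E)) (poly subdiv_cubic (t + 1))"
proof -
  have carrier: "adj_orig_mid \<in> carrier_mat (length vlist) (2 * npaths)"
    "adj_mid_orig \<in> carrier_mat (2 * npaths) (length vlist)"
    "mid_block t \<in> carrier_mat (2 * npaths) (2 * npaths)"
    "mid_solve t \<in> carrier_mat (2 * npaths) (length vlist)"
    by (simp_all add: adj_orig_mid_def adj_mid_orig_def mid_block_def mid_solve_def)
  have "poly (char_poly (nlap SV SE)) (t + 1) = det (- char_matrix (nlap_mat sub_list SV SE) (t + 1))"
    unfolding char_poly_nlap_sub using nlap_mat_carrier sub_list(3) by (metis char_poly_matrix)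
  also have "\<dots> = det (four_block_mat (t \<cdot>\<^sub>m 1\<^sub>m (length vlist)) adj_orig_mid adj_mid_orig (mid_block t))"
    unfolding char_matrix_sub_block by simp
  also have "\<dots> = det (mid_block t) * det (t \<cdot>\<^sub>m 1\<^sub>m (length vlist) - adj_orig_mid * mid_solve t)"
    by (rule det_four_block_mat_schur[OF _ carrier mid_block_mult_mid_solve[OF t]]) simp
  also have "\<dots> = (t * t - 1/4) ^ npaths * (1 / (4 * t * t - 1)) ^ length vlist
      * det (- char_matrix (nlap V E) (poly subdiv_cubic (t + 1)))"
    unfolding det_mid_block schur_complement_mid_block[OF t] using nlap_carrier
    by (simp add: char_matrix_def)
  also have "det (- char_matrix (nlap V E) (poly subdiv_cubic (t + 1)))
      = poly (char_poly (nlap V E)) (poly subdiv_cubic (t + 1))"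
    by (rule char_poly_matrix[OF nlap_carrier, symmetric])
  finally show ?thesis .
qed

lemma char_poly_subdivision:
  "Polynomial.smult (4 ^ npaths) (char_poly (nlap SV SE)) * subdiv_quadratic ^ card V
    = subdiv_quadratic ^ npaths * pcompose (char_poly (nlap V E)) subdiv_cubic"
proof (rule poly_eq_cofinite)
  fix x :: real assume "x \<notin> {1/2, 3/2}"
  define t where "t = x - 1"
  have x: "x = t + 1"
    by (simp add: t_def)
  have quad: "poly subdiv_quadratic (t + 1) = 4 * t * t - 1"
    by (simp add: poly_subdiv_quadratic algebra_simps)
  have "poly subdiv_quadratic (t + 1) \<noteq> 0"
    using \<open>x \<notin> {1/2, 3/2}\<close> by (auto simp: poly_subdiv_quadratic t_def)
  then have t: "t * t \<noteq> 1/4"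
    unfolding quad by (auto simp: algebra_simps)
  have "poly (Polynomial.smult (4 ^ npaths) (char_poly (nlap SV SE)) * subdiv_quadratic ^ card V) x
    = (4 * (t * t - 1/4)) ^ npaths * (1 / (4 * t * t - 1) * (4 * t * t - 1)) ^ card V
      * poly (char_poly (nlap V E)) (poly subdiv_cubic x)"
    unfolding poly_mult poly_smult poly_power quad x poly_char_poly_sub[OF t] length_vlist
    by (simp only: power_mult_distrib mult_ac)
  also have "\<dots> = poly (subdiv_quadratic ^ npaths * pcompose (char_poly (nlap V E)) subdiv_cubic) x"
    unfolding x poly_mult poly_power poly_pcompose quad using t by (simp add: algebra_simps)
  finally show "poly (Polynomial.smult (4 ^ npaths) (char_poly (nlap SV SE)) * subdiv_quadratic ^ card V) x
    = poly (subdiv_quadratic ^ npaths * pcompose (char_poly (nlap V E)) subdiv_cubic) x" .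
qed simp

lemma nlap_mult_subdivision:
  "nlap_mult SV SE x + card V * Polynomial.order x subdiv_quadratic
    = k * num_edges E * Polynomial.order x subdiv_quadratic
      + nlap_mult V E (poly subdiv_cubic x) * Suc (Polynomial.order x subdiv_quadratic)"
proof -
  let ?S = "char_poly (nlap SV SE)" and ?G = "char_poly (nlap V E)"
  have S: "?S \<noteq> 0" and G: "?G \<noteq> 0"
    by (simp_all add: nlap_def char_poly_nonzero[OF nlap_mat_carrier])
  note identity = arg_cong[OF char_poly_subdivision, of "Polynomial.order x"]
  have "Polynomial.smult (4 ^ npaths) ?S * subdiv_quadratic ^ card V \<noteq> 0"
    using S subdiv_quadratic_nonzero by simp
  moreover have "subdiv_quadratic ^ npaths * pcompose ?G subdiv_cubic \<noteq> 0"
    using G subdiv_quadratic_nonzero degree_subdiv_cubic pcompose_eq_0[of ?G subdiv_cubic] by auto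
  ultimately show ?thesis
    using identity G subdiv_quadratic_nonzero degree_subdiv_cubic
    by (simp add: nlap_mult_def order_mult order_smult order_power order_pcompose
        order_subdiv_cubic_level npaths_eq)
qed

end

theorem theorem1p2:
  fixes V :: "'a set" and E :: "'a \<Rightarrow> 'a \<Rightarrow> bool" and k :: nat
  assumes G: "simple_graph V E"
    and conn: "connected_graph V E"
    and two: "card V \<ge> 2"
    and k: "k \<ge> 1"
  defines "n \<equiv> card V" and "m \<equiv> num_edges E"
    and "SV \<equiv> sub_vertices k V E" and "SE \<equiv> sub_edge k E"
  shows
    "(\<forall>(lam::real) (mu::real). nlap_mult V E lam > 0 \<and> lam \<noteq> 0 \<and> lam \<noteq> 2
        \<and> 4 * mu^3 - 12 * mu^2 + 9 * mu - lam = 0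
        \<longrightarrow> nlap_mult SV SE mu = nlap_mult V E lam)
     \<and> nlap_mult SV SE 0 = 1
     \<and> (bipartite V E \<longrightarrow> nlap_mult SV SE 2 = 1)
     \<and> (\<not> bipartite V E \<longrightarrow>
          int (nlap_mult SV SE (1/2)) = int k * int m - int n
        \<and> int (nlap_mult SV SE (3/2)) = int k * int m - int n + 2)
     \<and> (bipartite V E \<longrightarrow>
          int (nlap_mult SV SE (1/2)) = int k * int m - int n + 2
        \<and> int (nlap_mult SV SE (3/2)) = int k * int m - int n + 2)"
proof -
  interpret subdivision V E k
    by unfold_locales (use G conn two k in auto)
  have key: "nlap_mult SV SE x + n * Polynomial.order x subdiv_quadratic
    = k * m * Polynomial.order x subdiv_quadratic
      + nlap_mult V E (poly subdiv_cubic x) * Suc (Polynomial.order x subdiv_quadratic)" for x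
    using nlap_mult_subdivision by (simp add: n_def m_def SV_def SE_def)
  have "nlap_mult SV SE mu = nlap_mult V E lam"
    if "lam \<noteq> 0" "lam \<noteq> 2" "4 * mu^3 - 12 * mu^2 + 9 * mu - lam = 0" for lam mu :: real
  proof -
    have "poly subdiv_cubic mu = lam"
      using that(3) by (simp add: poly_subdiv_cubic)
    then have "mu \<noteq> 1/2" "mu \<noteq> 3/2"
      using that(1,2) subdiv_cubic_values(3,4) by metis+
    then show ?thesis
      using key[of mu] \<open>poly subdiv_cubic mu = lam\<close> by (simp add: order_subdiv_quadratic)
  qed
  moreover have G0: "nlap_mult V E 0 = 1" and "bipartite V E \<Longrightarrow> nlap_mult V E 2 = 1"
    and "\<not> bipartite V E \<Longrightarrow> nlap_mult V E 2 = 0"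
    using order_nlap_0 order_nlap_2_bipartite order_nlap_2_non_bipartite by (simp_all add: nlap_mult_def)
  moreover have "int (nlap_mult SV SE (1/2)) = int k * int m - int n + 2 * int (nlap_mult V E 2)"
    using arg_cong[OF key[of "1/2"], of int] by (simp add: order_subdiv_quadratic subdiv_cubic_values)
  moreover have "int (nlap_mult SV SE (3/2)) = int k * int m - int n + 2"
    using arg_cong[OF key[of "3/2"], of int] G0 by (simp add: order_subdiv_quadratic subdiv_cubic_values)
  moreover note key[of 0] key[of 2]
  ultimately show ?thesis
    by (simp add: order_subdiv_quadratic subdiv_cubic_values)
qed

end
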